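(* Let $f:[1,\infty)\to\mathbb R$ be convex and monotonically increasing with $f(1)=0$. For finite-dimensional $\mathcal H_1,\mathcal H_2$ and density operators $\sigma$ on $\mathcal H_1\otimes\mathcal H_2$ set $E_f(\sigma):=f(\|\sigma\|_\gamma)$. Then $E_f$ satisfies: (E0) $E_f\ge0$ and $E_f(\rho)$ does not change when $\mathcal H_1,\mathcal H_2$ are isometrically embedded in larger finite-dimensional Hilbert spaces; (E1) $E_f(\sigma)=0$ for every separable $\sigma$; (E2) $E_f((U_1\otimes U_2)\sigma(U_1^\dagger\otimes U_2^\dagger))=E_f(\sigma)$ for all local unitaries $U_1,U_2$; (E3) $E_f((T_1\otimes T_2)(\sigma))\le E_f(\sigma)$ for all trace-preserving operations $T_1$ on $\mathcal T(\mathcal H_1)$ and $T_2$ on $\mathcal T(\mathcal H_2)$ (mapping into trace classes of finite-dimensional spaces); (E4) $E_f$ is convex on the set of density operators. In particular $E(\sigma)=\|\sigma\|_\gamma-1$ has these properties.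
   Context: A density operator is a positive trace class operator with trace one; it is separable if it is a finite positive combination $\sum_i\omega_i\rho^{(1)}_i\otimes\rho^{(2)}_i$ of products of density operators. $\|x\|_1$ is the trace norm. An operation is a linear completely positive map between trace class spaces that is trace non-increasing on positive operators; trace-preserving if it preserves traces of positive operators. The greatest cross norm is $\|t\|_\gamma:=\inf\{\sum_{i=1}^n\|u_i\|_1\|v_i\|_1 : t=\sum_{i=1}^n u_i\otimes v_i\}$ over finite decompositions into elementary tensors of operators on $\mathcal H_1$ and $\mathcal H_2$. For density operators $\|\sigma\|_\gamma\ge1$. *)

theory Defs
  imports "HOL-Analysis.Convex" "Jordan_Normal_Form.Matrix"
begin

text \<open>Finite-dimensional Hilbert spaces are modelled as \<open>\<complex>^n\<close>; operators on them
  as \<open>n \<times> n\<close> complex matrices (type \<open>complex mat\<close> with carrier \<open>carrier_mat n n\<close>).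
  The tensor product \<open>\<complex>^n \<otimes> \<complex>^m\<close> is \<open>\<complex>^(n*m)\<close> with basis index \<open>i*m+k\<close>
  (first factor outer), i.e. the Kronecker product.\<close>

definition adj :: "complex mat \<Rightarrow> complex mat" where
  "adj A = mat (dim_col A) (dim_row A) (\<lambda>(i,j). cnj (A $$ (j,i)))"

definition mtrace :: "complex mat \<Rightarrow> complex" where
  "mtrace A = (\<Sum>i<dim_row A. A $$ (i,i))"

definition psd :: "nat \<Rightarrow> complex mat \<Rightarrow> bool" where
  "psd n A \<longleftrightarrow> A \<in> carrier_mat n n \<and>
     (\<forall>v :: nat \<Rightarrow> complex.
        Im (\<Sum>i<n. \<Sum>j<n. cnj (v i) * A $$ (i,j) * v j) = 0 \<and>
        0 \<le> Re (\<Sum>i<n. \<Sum>j<n. cnj (v i) * A $$ (i,j) * v j))"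

definition density :: "nat \<Rightarrow> complex mat \<Rightarrow> bool" where
  "density n A \<longleftrightarrow> psd n A \<and> mtrace A = 1"

definition mat_abs :: "complex mat \<Rightarrow> complex mat" where
  "mat_abs A = (THE P. psd (dim_col A) P \<and> P * P = adj A * A)"

definition trace_norm :: "complex mat \<Rightarrow> real" where
  "trace_norm A = Re (mtrace (mat_abs A))"

definition kron :: "complex mat \<Rightarrow> complex mat \<Rightarrow> complex mat" where
  "kron A B = mat (dim_row A * dim_row B) (dim_col A * dim_col B)
     (\<lambda>(i,j). A $$ (i div dim_row B, j div dim_col B) * B $$ (i mod dim_row B, j mod dim_col B))"

definition msum :: "nat \<Rightarrow> nat \<Rightarrow> nat \<Rightarrow> (nat \<Rightarrow> complex mat) \<Rightarrow> complex mat" where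
  "msum r c N F = mat r c (\<lambda>(i,j). \<Sum>k<N. F k $$ (i,j))"

definition cross_norm :: "nat \<Rightarrow> nat \<Rightarrow> complex mat \<Rightarrow> real" where
  "cross_norm n m t = Inf {(\<Sum>i<N. trace_norm (u i) * trace_norm (v i)) | N u v.
      (\<forall>i<N. u i \<in> carrier_mat n n \<and> v i \<in> carrier_mat m m) \<and>
      t = msum (n*m) (n*m) N (\<lambda>i. kron (u i) (v i))}"

definition separable :: "nat \<Rightarrow> nat \<Rightarrow> complex mat \<Rightarrow> bool" where
  "separable n m \<sigma> \<longleftrightarrow> (\<exists>N (\<omega>::nat \<Rightarrow> real) \<rho>1 \<rho>2.
      (\<forall>i<N. 0 < \<omega> i \<and> density n (\<rho>1 i) \<and> density m (\<rho>2 i)) \<and>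
      \<sigma> = msum (n*m) (n*m) N (\<lambda>i. complex_of_real (\<omega> i) \<cdot>\<^sub>m kron (\<rho>1 i) (\<rho>2 i)))"

definition unitary :: "nat \<Rightarrow> complex mat \<Rightarrow> bool" where
  "unitary n U \<longleftrightarrow> U \<in> carrier_mat n n \<and> adj U * U = 1\<^sub>m n \<and> U * adj U = 1\<^sub>m n"

definition isometry :: "nat \<Rightarrow> nat \<Rightarrow> complex mat \<Rightarrow> bool" where
  "isometry n n' V \<longleftrightarrow> V \<in> carrier_mat n' n \<and> adj V * V = 1\<^sub>m n"

definition munit :: "nat \<Rightarrow> nat \<Rightarrow> nat \<Rightarrow> complex mat" where
  "munit n i j = mat n n (\<lambda>(r,c). if r = i \<and> c = j then 1 else 0)"

definition blk :: "nat \<Rightarrow> complex mat \<Rightarrow> nat \<Rightarrow> nat \<Rightarrow> complex mat" where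
  "blk n X a b = mat n n (\<lambda>(i,j). X $$ (a*n+i, b*n+j))"

text \<open>\<open>id_k \<otimes> T\<close> for a map \<open>T\<close> from operators on \<open>\<complex>^n\<close> to operators on \<open>\<complex>^n'\<close>.\<close>
definition ampl :: "nat \<Rightarrow> nat \<Rightarrow> nat \<Rightarrow> (complex mat \<Rightarrow> complex mat) \<Rightarrow> complex mat \<Rightarrow> complex mat" where
  "ampl k n n' T X = mat (k*n') (k*n')
     (\<lambda>(r,c). T (blk n X (r div n') (c div n')) $$ (r mod n', c mod n'))"

definition operation :: "nat \<Rightarrow> nat \<Rightarrow> (complex mat \<Rightarrow> complex mat) \<Rightarrow> bool" where
  "operation n n' T \<longleftrightarrow>
     (\<forall>A \<in> carrier_mat n n. T A \<in> carrier_mat n' n') \<and>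
     (\<forall>A \<in> carrier_mat n n. \<forall>B \<in> carrier_mat n n. T (A + B) = T A + T B) \<and>
     (\<forall>A \<in> carrier_mat n n. \<forall>c. T (c \<cdot>\<^sub>m A) = c \<cdot>\<^sub>m T A) \<and>
     (\<forall>k X. psd (k*n) X \<longrightarrow> psd (k*n') (ampl k n n' T X)) \<and>
     (\<forall>A. psd n A \<longrightarrow> Re (mtrace (T A)) \<le> Re (mtrace A))"

definition tp_operation :: "nat \<Rightarrow> nat \<Rightarrow> (complex mat \<Rightarrow> complex mat) \<Rightarrow> bool" where
  "tp_operation n n' T \<longleftrightarrow> operation n n' T \<and> (\<forall>A. psd n A \<longrightarrow> mtrace (T A) = mtrace A)"

text \<open>\<open>(T1 \<otimes> T2)(\<sigma>)\<close>: the linear extension of \<open>u \<otimes> v \<mapsto> T1 u \<otimes> T2 v\<close>.\<close>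
definition tensor_map :: "nat \<Rightarrow> nat \<Rightarrow> nat \<Rightarrow> nat \<Rightarrow> (complex mat \<Rightarrow> complex mat) \<Rightarrow>
    (complex mat \<Rightarrow> complex mat) \<Rightarrow> complex mat \<Rightarrow> complex mat" where
  "tensor_map n m n' m' T1 T2 \<sigma> = mat (n'*m') (n'*m') (\<lambda>(r,c).
     \<Sum>i<n. \<Sum>j<n. \<Sum>k<m. \<Sum>l<m.
       \<sigma> $$ (i*m+k, j*m+l) * kron (T1 (munit n i j)) (T2 (munit m k l)) $$ (r,c))"

definition ent_measure :: "(nat \<Rightarrow> nat \<Rightarrow> complex mat \<Rightarrow> real) \<Rightarrow> bool" where
  "ent_measure E \<longleftrightarrow>
   \<comment> \<open>E0: nonnegativity\<close>
   (\<forall>n m \<sigma>. density (n*m) \<sigma> \<longrightarrow> 0 \<le> E n m \<sigma>) \<and>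
   \<comment> \<open>E0: invariance under isometric embeddings\<close>
   (\<forall>n m n' m' V1 V2 \<sigma>. density (n*m) \<sigma> \<and> isometry n n' V1 \<and> isometry m m' V2 \<longrightarrow>
      E n' m' (kron V1 V2 * \<sigma> * adj (kron V1 V2)) = E n m \<sigma>) \<and>
   \<comment> \<open>E1\<close>
   (\<forall>n m \<sigma>. density (n*m) \<sigma> \<and> separable n m \<sigma> \<longrightarrow> E n m \<sigma> = 0) \<and>
   \<comment> \<open>E2\<close>
   (\<forall>n m U1 U2 \<sigma>. density (n*m) \<sigma> \<and> unitary n U1 \<and> unitary m U2 \<longrightarrow>
      E n m (kron U1 U2 * \<sigma> * adj (kron U1 U2)) = E n m \<sigma>) \<and>
   \<comment> \<open>E3\<close>
   (\<forall>n m n' m' T1 T2 \<sigma>. density (n*m) \<sigma> \<and> tp_operation n n' T1 \<and> tp_operation m m' T2 \<longrightarrow>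
      E n' m' (tensor_map n m n' m' T1 T2 \<sigma>) \<le> E n m \<sigma>) \<and>
   \<comment> \<open>E4\<close>
   (\<forall>n m \<sigma> \<tau> (p::real). density (n*m) \<sigma> \<and> density (n*m) \<tau> \<and> 0 \<le> p \<and> p \<le> 1 \<longrightarrow>
      E n m (complex_of_real p \<cdot>\<^sub>m \<sigma> + complex_of_real (1 - p) \<cdot>\<^sub>m \<tau>)
        \<le> p * E n m \<sigma> + (1 - p) * E n m \<tau>)"

end

theory Submission
  imports Defs "Jordan_Normal_Form.Spectral_Radius"
begin

text \<open>For a density operator \<open>\<sigma>\<close> every decomposition \<open>\<sigma> = \<Sum> u\<^sub>i \<otimes> v\<^sub>i\<close> satisfies
  \<open>1 = |tr \<sigma>| \<le> \<Sum> |tr u\<^sub>i| |tr v\<^sub>i| \<le> \<Sum> \<parallel>u\<^sub>i\<parallel>\<^sub>1 \<parallel>v\<^sub>i\<parallel>\<^sub>1\<close>, so \<open>\<parallel>\<sigma>\<parallel>\<^sub>\<gamma> \<ge> 1\<close>, with equality for separable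
  \<open>\<sigma>\<close>, whose defining decomposition costs \<open>\<Sum> \<omega>\<^sub>i = 1\<close>. Local maps act factorwise on decompositions, so
  \<open>\<parallel>\<cdot>\<parallel>\<^sub>\<gamma>\<close> can only decrease under \<open>T\<^sub>1 \<otimes> T\<^sub>2\<close> when \<open>T\<^sub>1\<close> and \<open>T\<^sub>2\<close> contract the trace norm. This holds for
  isometric embeddings and their left inverses, which gives invariance, and for every operation: by
  the polar decomposition \<open>u = W |u|\<close> the block matrix \<open>[[W |u| W\<^sup>\<dagger>, u], [u\<^sup>\<dagger>, |u|]]\<close> is positive,
  complete positivity keeps it positive after applying \<open>T\<close> blockwise, and testing the result against
  the polar part of \<open>T u\<close> gives \<open>2 \<parallel>T u\<parallel>\<^sub>1 \<le> tr T(W |u| W\<^sup>\<dagger>) + tr T |u| \<le> 2 \<parallel>u\<parallel>\<^sub>1\<close>. Concatenating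
  decompositions gives convexity. Finally an increasing convex \<open>f\<close> on \<open>[1, \<infinity>)\<close> with \<open>f 1 = 0\<close>
  preserves all of these properties.\<close>

lemma sum_lessThan_add: "(\<Sum>i<(a::nat)+b. g i) = (\<Sum>i<a. g i) + (\<Sum>i<b. g (a+i))"
  by (induction b) (auto simp: add.assoc)

lemma sum_lessThan_mult: "(\<Sum>i<(a::nat)*b. g i) = (\<Sum>p<a. \<Sum>q<b. g (p*b+q))"
proof (induction a)
  case 0 then show ?case by simp
next
  case (Suc a)
  have "(\<Sum>i<Suc a*b. g i) = (\<Sum>i<a*b + b. g i)" by (simp add: add.commute)
  also have "\<dots> = (\<Sum>p<a. \<Sum>q<b. g (p*b+q)) + (\<Sum>q<b. g (a*b+q))" by (simp add: sum_lessThan_add Suc)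
  finally show ?case by simp
qed

lemma sum_lessThan_double: "(\<Sum>i<2*(k::nat). g i) = (\<Sum>i<k. g i) + (\<Sum>i<k. g (k+i))"
  using sum_lessThan_add[of g k k] by (simp add: mult_2)

lemma mult_add_less_mult[simp]: "(x::nat) < a \<Longrightarrow> y < b \<Longrightarrow> x*b+y < a*b"
proof -
  assume "x < a" "y < b"
  then have "x*b + y < x*b + b" by simp
  also have "\<dots> = (Suc x) * b" by simp
  also have "\<dots> \<le> a * b" using \<open>x < a\<close> by (intro mult_right_mono) auto
  finally show ?thesis .
qed

lemma div_mod_less: "(p::nat) < a * b \<Longrightarrow> p div b < a" "(p::nat) < a * b \<Longrightarrow> p mod b < b"
  by (auto simp: less_mult_imp_div_less) (metis mod_less_divisor mult_zero_right neq0_conv not_less_zero)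

lemma div_mod_eq_iff: "(b::nat) > 0 \<Longrightarrow> (i div b = j div b \<and> i mod b = j mod b) \<longleftrightarrow> i = j"
  by (metis div_mult_mod_eq)

text \<open>Matrix entries are computed as sums over \<open>{..<n}\<close> rather than as scalar products of rows and
  columns, and the primed lemmas restate carrier-based library lemmas with dimension equations, so
  that they can act as conditional simplification rules.\<close>


declare index_mult_mat(1)[simp del]

lemma index_mult_mat_sum: "A \<in> carrier_mat n k \<Longrightarrow> B \<in> carrier_mat k m \<Longrightarrow> i < n \<Longrightarrow> j < m \<Longrightarrow>
  (A * B) $$ (i,j) = (\<Sum>l<k. A $$ (i,l) * B $$ (l,j))"
  by (auto simp: index_mult_mat scalar_prod_def atLeast0LessThan intro!: sum.cong)

lemma index_mult_mat_sum'[simp]: "i < dim_row A \<Longrightarrow> j < dim_col B \<Longrightarrow> dim_col A = dim_row B \<Longrightarrow>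
  (A * B) $$ (i,j) = (\<Sum>l<dim_row B. A $$ (i,l) * B $$ (l,j))"
  by (auto simp: index_mult_mat scalar_prod_def atLeast0LessThan intro!: sum.cong)

lemma assoc_mult_mat'[simp]: "dim_col A = dim_row B \<Longrightarrow> dim_col B = dim_row C \<Longrightarrow> A * B * C = A * (B * C)"
  by (rule assoc_mult_mat[of A "dim_row A" "dim_col A" B "dim_col B" C "dim_col C"]) auto

lemma left_mult_one_mat'[simp]: "dim_row (A::complex mat) = n \<Longrightarrow> 1\<^sub>m n * A = A"
  by (rule left_mult_one_mat[of A n "dim_col A"]) auto

lemma right_mult_one_mat'[simp]: "dim_col (A::complex mat) = n \<Longrightarrow> A * 1\<^sub>m n = A"
  by (rule right_mult_one_mat[of A "dim_row A" n]) auto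

lemma mult_left_inverse_cancel[simp]: "(A::complex mat) * B = 1\<^sub>m n \<Longrightarrow> dim_col A = dim_row B \<Longrightarrow> dim_row X = n \<Longrightarrow> A * (B * X) = X"
proof -
  assume AB: "A * B = 1\<^sub>m n" and d: "dim_col A = dim_row B" and X: "dim_row X = n"
  have "dim_col B = n" using arg_cong[OF AB, of dim_col] by simp
  then have "A * (B * X) = (A * B) * X" using d X by simp
  then show ?thesis using AB X by simp
qed

lemma mult_minus_distrib_mat': "dim_col (A::complex mat) = dim_row B \<Longrightarrow> dim_row B = dim_row C \<Longrightarrow> dim_col B = dim_col C \<Longrightarrow> A * (B - C) = A * B - A * C"
  by (rule mult_minus_distrib_mat[of A "dim_row A" "dim_col A" B "dim_col B" C]) auto

lemma minus_mult_distrib_mat': "dim_row (A::complex mat) = dim_row B \<Longrightarrow> dim_col A = dim_col B \<Longrightarrow> dim_col A = dim_row C \<Longrightarrow> (A - B) * C = A * C - B * C"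
  by (rule minus_mult_distrib_mat[of A "dim_row A" "dim_col A" B C "dim_col C"]) auto

lemma mult_add_distrib_mat': "dim_col (A::complex mat) = dim_row B \<Longrightarrow> dim_row B = dim_row C \<Longrightarrow> dim_col B = dim_col C \<Longrightarrow> A * (B + C) = A * B + A * C"
  by (rule mult_add_distrib_mat[of A "dim_row A" "dim_col A" B "dim_col B" C]) auto

lemma add_mult_distrib_mat': "dim_row (A::complex mat) = dim_row B \<Longrightarrow> dim_col A = dim_col B \<Longrightarrow> dim_col A = dim_row C \<Longrightarrow> (A + B) * C = A * C + B * C"
  by (rule add_mult_distrib_mat[of A "dim_row A" "dim_col A" B C "dim_col C"]) auto

lemma mult_smult_distrib': "dim_col (A::complex mat) = dim_row B \<Longrightarrow> A * (k \<cdot>\<^sub>m B) = k \<cdot>\<^sub>m (A * B)"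
  by (rule mult_smult_distrib[of A "dim_row A" "dim_col A" B "dim_col B"]) auto

lemma mult_smult_assoc_mat': "dim_col (A::complex mat) = dim_row B \<Longrightarrow> (k \<cdot>\<^sub>m A) * B = k \<cdot>\<^sub>m (A * B)"
  by (rule mult_smult_assoc_mat[of A "dim_row A" "dim_col A" B "dim_col B"]) auto

lemma mult_carrier_mat'[simp]: "dim_row A = r \<Longrightarrow> dim_col B = c \<Longrightarrow> A * B \<in> carrier_mat r c"
  by auto

lemma smult_smult_mat: "a \<cdot>\<^sub>m (b \<cdot>\<^sub>m (A::complex mat)) = (a * b) \<cdot>\<^sub>m A"
  by (rule eq_matI) auto

lemma if_zero_mult[simp]: "(if P then x else 0) * (y::'a::mult_zero) = (if P then x * y else 0)"
  "y * (if P then x else 0) = (if P then y * x else 0)" by auto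

lemma sum_if_cond[simp]: "(\<Sum>m\<in>S. if P then G m else 0) = (if P then \<Sum>m\<in>S. G m else 0)"
  by auto

lemma cnj_if_zero[simp]: "cnj (if P then x else 0) = (if P then cnj x else 0)" by auto

lemma cnj_mult_self: "cnj z * z = complex_of_real ((cmod z)^2)"
  by (simp only: mult.commute[of "cnj z"] complex_mult_cnj cmod_power2)

lemma adj_carrier[simp]: "A \<in> carrier_mat n m \<Longrightarrow> adj A \<in> carrier_mat m n"
  by (auto simp: adj_def)

lemma dim_adj[simp]: "dim_row (adj A) = dim_col A" "dim_col (adj A) = dim_row A"
  by (auto simp: adj_def)

lemma index_adj[simp]: "i < dim_col A \<Longrightarrow> j < dim_row A \<Longrightarrow> adj A $$ (i,j) = cnj (A $$ (j,i))"
  by (auto simp: adj_def)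

lemma adj_adj[simp]: "adj (adj A) = A"
  by (rule eq_matI) auto

lemma adj_mult: "A \<in> carrier_mat n k \<Longrightarrow> B \<in> carrier_mat k m \<Longrightarrow> adj (A * B) = adj B * adj A"
  by (rule eq_matI) (auto simp: ac_simps)

lemma adj_mult'[simp]: "dim_col A = dim_row B \<Longrightarrow> adj (A * B) = adj B * adj A"
  by (rule adj_mult[of A "dim_row A" "dim_col A" B "dim_col B"]) auto

lemma adj_minus: "A \<in> carrier_mat n m \<Longrightarrow> B \<in> carrier_mat n m \<Longrightarrow> adj (A - B) = adj A - adj B"
  by (rule eq_matI) auto

lemma adj_smult: "adj (c \<cdot>\<^sub>m A) = cnj c \<cdot>\<^sub>m adj A"
  by (rule eq_matI) auto

lemma adj_one[simp]: "adj (1\<^sub>m n) = 1\<^sub>m n"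
  by (rule eq_matI) auto

lemma mtrace_mult_commute: "A \<in> carrier_mat n k \<Longrightarrow> B \<in> carrier_mat k n \<Longrightarrow> mtrace (A * B) = mtrace (B * A)"
  unfolding mtrace_def
  by (simp add: sum.swap[of _ "{..<n}"] mult.commute)

lemma mtrace_add: "A \<in> carrier_mat n n \<Longrightarrow> B \<in> carrier_mat n n \<Longrightarrow> mtrace (A + B) = mtrace A + mtrace B"
  unfolding mtrace_def by (simp add: sum.distrib)

lemma mtrace_minus: "A \<in> carrier_mat n n \<Longrightarrow> B \<in> carrier_mat n n \<Longrightarrow> mtrace (A - B) = mtrace A - mtrace B"
  unfolding mtrace_def by (simp add: sum_subtractf)

lemma mtrace_smult: "A \<in> carrier_mat n n \<Longrightarrow> mtrace (c \<cdot>\<^sub>m A) = c * mtrace A"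
  unfolding mtrace_def by (auto simp: sum_distrib_left intro!: sum.cong)

lemma mtrace_adj: "A \<in> carrier_mat n n \<Longrightarrow> mtrace (adj A) = cnj (mtrace A)"
  unfolding mtrace_def by simp

lemma kron_carrier[simp]: "A \<in> carrier_mat a a' \<Longrightarrow> B \<in> carrier_mat b b' \<Longrightarrow> kron A B \<in> carrier_mat (a*b) (a'*b')"
  by (auto simp: kron_def)

lemma dim_kron[simp]: "dim_row (kron A B) = dim_row A * dim_row B" "dim_col (kron A B) = dim_col A * dim_col B"
  by (auto simp: kron_def)

lemma index_kron: "i < dim_row A * dim_row B \<Longrightarrow> j < dim_col A * dim_col B \<Longrightarrow>
  kron A B $$ (i,j) = A $$ (i div dim_row B, j div dim_col B) * B $$ (i mod dim_row B, j mod dim_col B)"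
  by (auto simp: kron_def)

lemma index_kron': "A \<in> carrier_mat a a' \<Longrightarrow> B \<in> carrier_mat b b' \<Longrightarrow> i < a*b \<Longrightarrow> j < a'*b' \<Longrightarrow>
  kron A B $$ (i,j) = A $$ (i div b, j div b') * B $$ (i mod b, j mod b')"
  by (auto simp: kron_def)

lemma kron_mult: assumes A: "A \<in> carrier_mat a a'" and B: "B \<in> carrier_mat b b'"
  and C: "C \<in> carrier_mat a' a''" and D: "D \<in> carrier_mat b' b''"
  shows "kron A B * kron C D = kron (A * C) (B * D)"
proof (rule eq_matI)
  fix i j assume i: "i < dim_row (kron (A * C) (B * D))" and j: "j < dim_col (kron (A * C) (B * D))"
  have i': "i < a*b" and j': "j < a''*b''" using i j A B C D by auto
  have "(kron A B * kron C D) $$ (i,j) = (\<Sum>l<a'*b'. kron A B $$ (i,l) * kron C D $$ (l,j))"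
    using i' j' A B C D by (intro index_mult_mat_sum) auto
  also have "\<dots> = (\<Sum>p<a'. \<Sum>q<b'. A $$ (i div b, p) * B $$ (i mod b, q) * (C $$ (p, j div b'') * D $$ (q, j mod b'')))"
    unfolding sum_lessThan_mult using A B C D i' j'
    by (intro sum.cong refl) (auto simp: index_kron' div_mod_less)
  also have "\<dots> = (\<Sum>p<a'. A $$ (i div b, p) * C $$ (p, j div b'')) * (\<Sum>q<b'. B $$ (i mod b, q) * D $$ (q, j mod b''))"
    by (simp add: sum_product ac_simps)
  also have "\<dots> = kron (A * C) (B * D) $$ (i,j)"
    using A B C D i' j' by (subst index_kron'[of _ a a'' _ b b'']) (auto simp: index_mult_mat_sum div_mod_less)
  finally show "(kron A B * kron C D) $$ (i,j) = kron (A * C) (B * D) $$ (i,j)" .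
qed (use A B C D in auto)

lemma adj_kron: "adj (kron A B) = kron (adj A) (adj B)"
  by (rule eq_matI) (auto simp: index_kron div_mod_less)

lemma kron_smult_left: "kron (c \<cdot>\<^sub>m A) B = c \<cdot>\<^sub>m kron A B"
  by (rule eq_matI) (auto simp: index_kron div_mod_less)

lemma mtrace_kron: assumes A: "A \<in> carrier_mat a a" and B: "B \<in> carrier_mat b b"
  shows "mtrace (kron A B) = mtrace A * mtrace B"
proof -
  have "mtrace (kron A B) = (\<Sum>p<a. \<Sum>q<b. kron A B $$ (p*b+q, p*b+q))"
    unfolding mtrace_def using A B by (simp add: sum_lessThan_mult)
  also have "\<dots> = (\<Sum>p<a. \<Sum>q<b. A $$ (p,p) * B $$ (q,q))"
    using A B by (intro sum.cong refl) (auto simp: index_kron')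
  also have "\<dots> = mtrace A * mtrace B" unfolding mtrace_def using A B by (simp add: sum_product)
  finally show ?thesis .
qed

lemma kron_one: "kron (1\<^sub>m a) (1\<^sub>m b) = 1\<^sub>m (a*b)"
proof (rule eq_matI)
  fix i j assume "i < dim_row (1\<^sub>m (a * b))" "j < dim_col (1\<^sub>m (a * b))"
  then have "i < a*b" "j < a*b" by auto
  moreover then have "b > 0" by (cases b) auto
  ultimately show "kron (1\<^sub>m a) (1\<^sub>m b) $$ (i, j) = 1\<^sub>m (a * b) $$ (i, j)"
    using div_mod_eq_iff[of b i j] by (auto simp: index_kron div_mod_less)
qed auto

lemma msum_carrier[simp]: "msum r c N F \<in> carrier_mat r c" by (simp add: msum_def)

lemma dim_msum[simp]: "dim_row (msum r c N F) = r" "dim_col (msum r c N F) = c" by (auto simp: msum_def)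

lemma index_msum[simp]: "i < r \<Longrightarrow> j < c \<Longrightarrow> msum r c N F $$ (i,j) = (\<Sum>k<N. F k $$ (i,j))"
  by (simp add: msum_def)

lemma msum_cong: "(\<And>i. i < N \<Longrightarrow> F i = G i) \<Longrightarrow> msum r c N F = msum r c N G"
  unfolding msum_def by (intro cong_mat refl) (auto intro!: sum.cong)

lemma msum_0: "msum r c 0 F = 0\<^sub>m r c" by (rule eq_matI) auto

lemma msum_Suc: "F N \<in> carrier_mat r c \<Longrightarrow> msum r c (Suc N) F = msum r c N F + F N"
  by (rule eq_matI) auto

lemma msum_append: "msum r c (N1+N2) F = msum r c N1 F + msum r c N2 (\<lambda>i. F (N1+i))"
  by (rule eq_matI) (auto simp: sum_lessThan_add)

lemma msum_smult: "(\<And>i. i < N \<Longrightarrow> F i \<in> carrier_mat r c) \<Longrightarrow> a \<cdot>\<^sub>m msum r c N F = msum r c N (\<lambda>i. a \<cdot>\<^sub>m F i)"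
proof (rule eq_matI)
  assume F: "\<And>i. i < N \<Longrightarrow> F i \<in> carrier_mat r c"
  fix i j assume "i < dim_row (msum r c N (\<lambda>i. a \<cdot>\<^sub>m F i))" "j < dim_col (msum r c N (\<lambda>i. a \<cdot>\<^sub>m F i))"
  then have i: "i < r" and j: "j < c" by auto
  have "(a \<cdot>\<^sub>m F k) $$ (i,j) = a * F k $$ (i,j)" if "k < N" for k using F[OF that] i j by auto
  then show "(a \<cdot>\<^sub>m msum r c N F) $$ (i, j) = msum r c N (\<lambda>i. a \<cdot>\<^sub>m F i) $$ (i, j)"
    using i j by (simp add: sum_distrib_left)
qed auto

lemma msum_mult_left: assumes X: "X \<in> carrier_mat r' r" and F: "\<And>i. i < N \<Longrightarrow> F i \<in> carrier_mat r c"
  shows "X * msum r c N F = msum r' c N (\<lambda>i. X * F i)"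
proof (rule eq_matI)
  fix i j assume "i < dim_row (msum r' c N (\<lambda>i. X * F i))" "j < dim_col (msum r' c N (\<lambda>i. X * F i))"
  then have i: "i < r'" and j: "j < c" by auto
  have "(X * msum r c N F) $$ (i,j) = (\<Sum>l<r. X $$ (i,l) * (\<Sum>k<N. F k $$ (l,j)))"
    using X i j by (simp add: index_mult_mat_sum)
  also have "\<dots> = (\<Sum>k<N. \<Sum>l<r. X $$ (i,l) * F k $$ (l,j))"
    by (simp add: sum_distrib_left sum.swap[of _ "{..<r}"])
  also have "\<dots> = (\<Sum>k<N. (X * F k) $$ (i,j))"
    using X F i j by (intro sum.cong refl) (simp add: index_mult_mat_sum[OF X F])
  finally show "(X * msum r c N F) $$ (i,j) = msum r' c N (\<lambda>i. X * F i) $$ (i,j)" using i j by simp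
qed (use X in auto)

lemma msum_mult_right: assumes X: "X \<in> carrier_mat c c'" and F: "\<And>i. i < N \<Longrightarrow> F i \<in> carrier_mat r c"
  shows "msum r c N F * X = msum r c' N (\<lambda>i. F i * X)"
proof (rule eq_matI)
  fix i j assume "i < dim_row (msum r c' N (\<lambda>i. F i * X))" "j < dim_col (msum r c' N (\<lambda>i. F i * X))"
  then have i: "i < r" and j: "j < c'" by auto
  have "(msum r c N F * X) $$ (i,j) = (\<Sum>l<c. (\<Sum>k<N. F k $$ (i,l)) * X $$ (l,j))"
    using X i j by (simp add: index_mult_mat_sum)
  also have "\<dots> = (\<Sum>k<N. \<Sum>l<c. F k $$ (i,l) * X $$ (l,j))"
    by (simp add: sum_distrib_right sum.swap[of _ "{..<c}"])
  also have "\<dots> = (\<Sum>k<N. (F k * X) $$ (i,j))"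
    using X F i j by (intro sum.cong refl) (simp add: index_mult_mat_sum[OF F X])
  finally show "(msum r c N F * X) $$ (i,j) = msum r c' N (\<lambda>i. F i * X) $$ (i,j)" using i j by simp
qed (use X in auto)

lemma mtrace_msum: assumes F: "\<And>i. i < N \<Longrightarrow> F i \<in> carrier_mat r r"
  shows "mtrace (msum r r N F) = (\<Sum>i<N. mtrace (F i))"
proof -
  have "mtrace (msum r r N F) = (\<Sum>k<N. \<Sum>i<r. F k $$ (i,i))"
    unfolding mtrace_def by (simp add: sum.swap[of _ "{..<r}"])
  also have "\<dots> = (\<Sum>i<N. mtrace (F i))" unfolding mtrace_def using F by (intro sum.cong refl) auto
  finally show ?thesis .
qed

lemma index_munit[simp]: "i < n \<Longrightarrow> j < n \<Longrightarrow> munit n a b $$ (i,j) = (if i = a \<and> j = b then 1 else 0)"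
  by (simp add: munit_def)

lemma munit_carrier[simp]: "munit n a b \<in> carrier_mat n n" by (simp add: munit_def)

lemma dim_munit[simp]: "dim_row (munit n a b) = n" "dim_col (munit n a b) = n" by (auto simp: munit_def)

lemma sum_sum_delta: fixes f :: "nat \<Rightarrow> nat \<Rightarrow> complex" assumes "i < n" "j < n"
  shows "(\<Sum>a<n. \<Sum>b<n. if a = i \<and> b = j then f a b else 0) = f i j"
proof -
  have "(\<Sum>a<n. \<Sum>b<n. if a = i \<and> b = j then f a b else 0) = (\<Sum>a<n. if a = i then f a j else 0)"
  proof (intro sum.cong refl)
    fix a show "(\<Sum>b<n. if a = i \<and> b = j then f a b else 0) = (if a = i then f a j else 0)"
      using assms by (cases "a = i") (auto simp: sum.delta)
  qed
  also have "\<dots> = f i j" using assms by simp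
  finally show ?thesis .
qed

lemma blk_carrier[simp]: "blk n X a b \<in> carrier_mat n n" by (simp add: blk_def)

lemma dim_blk[simp]: "dim_row (blk n X a b) = n" "dim_col (blk n X a b) = n" by (auto simp: blk_def)

lemma index_blk[simp]: "i < n \<Longrightarrow> j < n \<Longrightarrow> blk n X a b $$ (i,j) = X $$ (a*n+i, b*n+j)"
  by (simp add: blk_def)

lemma unitaryD: "unitary n U \<Longrightarrow> U \<in> carrier_mat n n" "unitary n U \<Longrightarrow> adj U * U = 1\<^sub>m n"
  "unitary n U \<Longrightarrow> U * adj U = 1\<^sub>m n"
  unfolding unitary_def by auto

lemma unitary_mult: "unitary n U \<Longrightarrow> unitary n V \<Longrightarrow> unitary n (U * V)"
  unfolding unitary_def
  by (auto simp: adj_mult)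

definition real_diag :: "nat \<Rightarrow> (nat \<Rightarrow> real) \<Rightarrow> complex mat" where
  "real_diag n d = mat n n (\<lambda>(i,j). if i = j then complex_of_real (d i) else 0)"

lemma real_diag_carrier[simp]: "real_diag n d \<in> carrier_mat n n" by (simp add: real_diag_def)

lemma dim_real_diag[simp]: "dim_row (real_diag n d) = n" "dim_col (real_diag n d) = n" by (auto simp: real_diag_def)

lemma real_diag_cong: "(\<And>i. i < n \<Longrightarrow> d i = e i) \<Longrightarrow> real_diag n d = real_diag n e"
  by (rule eq_matI) (auto simp: real_diag_def)

lemma index_real_diag_mult: "B \<in> carrier_mat n m \<Longrightarrow> l < n \<Longrightarrow> j < m \<Longrightarrow> (real_diag n d * B) $$ (l,j) = complex_of_real (d l) * B $$ (l,j)"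
  by (simp add: index_mult_mat_sum real_diag_def)

lemma index_mult_real_diag: "X \<in> carrier_mat m n \<Longrightarrow> i < m \<Longrightarrow> j < n \<Longrightarrow> (X * real_diag n d) $$ (i,j) = X $$ (i,j) * complex_of_real (d j)"
  by (simp add: index_mult_mat_sum real_diag_def)

lemma index_mult_real_diag': "dim_col X = n \<Longrightarrow> i < dim_row X \<Longrightarrow> j < n \<Longrightarrow> (X * real_diag n d) $$ (i,j) = X $$ (i,j) * complex_of_real (d j)"
  by (rule index_mult_real_diag[of X "dim_row X" n]) auto

lemma real_diag_mult: "real_diag n d * real_diag n e = real_diag n (\<lambda>i. d i * e i)"
  by (rule eq_matI) (auto simp: index_real_diag_mult, auto simp: real_diag_def)

lemma adj_real_diag[simp]: "adj (real_diag n d) = real_diag n d"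
  by (rule eq_matI) (auto simp: real_diag_def)

lemma index_unitary_diag: "U \<in> carrier_mat n n \<Longrightarrow> i < n \<Longrightarrow> j < n \<Longrightarrow>
  (U * real_diag n d * adj U) $$ (i,j) = (\<Sum>l<n. U $$ (i,l) * complex_of_real (d l) * cnj (U $$ (j,l)))"
proof -
  assume U: "U \<in> carrier_mat n n" and i: "i < n" and j: "j < n"
  have "(U * real_diag n d * adj U) $$ (i,j) = (\<Sum>l<n. U $$ (i,l) * (real_diag n d * adj U) $$ (l,j))"
    using U i j by (simp add: index_mult_mat_sum[of U n n "real_diag n d * adj U" n i j])
  also have "\<dots> = (\<Sum>l<n. U $$ (i,l) * complex_of_real (d l) * cnj (U $$ (j,l)))"
    using U i j by (intro sum.cong refl) (subst index_real_diag_mult[of "adj U" n n], auto)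
  finally show ?thesis .
qed

lemma unitary_diag_mult: assumes U: "unitary n U"
  shows "(U * real_diag n d * adj U) * (U * real_diag n e * adj U) = U * real_diag n (\<lambda>i. d i * e i) * adj U"
proof -
  have C: "U \<in> carrier_mat n n" "adj U * U = 1\<^sub>m n" using U unfolding unitary_def by auto
  have "(U * real_diag n d * adj U) * (U * real_diag n e * adj U) = U * real_diag n d * (adj U * U) * real_diag n e * adj U"
    using C by simp
  also have "\<dots> = U * real_diag n (\<lambda>i. d i * e i) * adj U"
    using C by (simp add: real_diag_mult[symmetric])
  finally show ?thesis .
qed

lemma unitary_diag_cong: "(\<And>i. i < n \<Longrightarrow> d i = e i) \<Longrightarrow> U * real_diag n d * adj U = U * real_diag n e * adj U"
  using real_diag_cong[of n d e] by simp

section \<open>Positive semidefinite matrices\<close>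

definition sesq :: "nat \<Rightarrow> complex mat \<Rightarrow> (nat \<Rightarrow> complex) \<Rightarrow> (nat \<Rightarrow> complex) \<Rightarrow> complex" where
  "sesq n A x y = (\<Sum>i<n. \<Sum>j<n. cnj (x i) * A $$ (i,j) * y j)"

lemma psd_iff_sesq: "psd n A \<longleftrightarrow> A \<in> carrier_mat n n \<and> (\<forall>v. Im (sesq n A v v) = 0 \<and> 0 \<le> Re (sesq n A v v))"
  unfolding psd_def sesq_def by simp

lemma psdD: "psd n A \<Longrightarrow> Im (sesq n A v v) = 0" "psd n A \<Longrightarrow> 0 \<le> Re (sesq n A v v)"
  "psd n A \<Longrightarrow> A \<in> carrier_mat n n"
  unfolding psd_iff_sesq by auto

lemma sesq_cong: "(\<And>i. i < n \<Longrightarrow> x i = x' i) \<Longrightarrow> (\<And>i. i < n \<Longrightarrow> y i = y' i) \<Longrightarrow> sesq n A x y = sesq n A x' y'"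
  unfolding sesq_def by (intro sum.cong refl) auto

lemma sesq_add_left: "sesq n A (\<lambda>l. x l + y l) z = sesq n A x z + sesq n A y z"
  unfolding sesq_def by (simp add: sum.distrib ring_distribs)

lemma sesq_add_right: "sesq n A z (\<lambda>l. x l + y l) = sesq n A z x + sesq n A z y"
  unfolding sesq_def by (simp add: sum.distrib ring_distribs)

lemma sesq_neg_left: "sesq n A (\<lambda>i. - x i) y = - sesq n A x y"
  unfolding sesq_def by (simp add: sum_negf[symmetric])

lemma sesq_neg_right: "sesq n A x (\<lambda>i. - y i) = - sesq n A x y"
  unfolding sesq_def by (simp add: sum_negf[symmetric])

lemma sesq_zero_left: "sesq n A (\<lambda>i. 0) y = 0"
  unfolding sesq_def by simp

lemma sesq_zero_right: "sesq n A x (\<lambda>i. 0) = 0"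
  unfolding sesq_def by simp

lemma sesq_delta: "i < n \<Longrightarrow> j < n \<Longrightarrow> sesq n A (\<lambda>l. if l = i then a else 0) (\<lambda>l. if l = j then b else 0) = cnj a * A $$ (i,j) * b"
  unfolding sesq_def by simp

lemma sesq_add_mat: "A \<in> carrier_mat n n \<Longrightarrow> B \<in> carrier_mat n n \<Longrightarrow> sesq n (A + B) x y = sesq n A x y + sesq n B x y"
  unfolding sesq_def by (simp add: sum.distrib ring_distribs)

lemma sesq_smult_mat: "A \<in> carrier_mat n n \<Longrightarrow> sesq n (c \<cdot>\<^sub>m A) x y = c * sesq n A x y"
  unfolding sesq_def by (simp add: sum_distrib_left ac_simps)

lemma sesq_one: "sesq n (1\<^sub>m n) x x = (\<Sum>i<n. cnj (x i) * x i)"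
proof -
  have "\<And>i j. i < n \<Longrightarrow> j < n \<Longrightarrow> cnj (x i) * 1\<^sub>m n $$ (i, j) * x j = (if i = j then cnj (x i) * x j else 0)"
    by auto
  then show ?thesis unfolding sesq_def by (auto intro!: sum.cong)
qed

lemma sesq_munit: "i < n \<Longrightarrow> j < n \<Longrightarrow> sesq n (munit n i j) x y = cnj (x i) * y j"
  unfolding sesq_def by (simp add: sum_sum_delta[of i n j "\<lambda>a b. cnj (x a) * 1 * y b"])

definition colf :: "complex mat \<Rightarrow> nat \<Rightarrow> (nat \<Rightarrow> complex)" where
  "colf X c = (\<lambda>i. X $$ (i,c))"

lemma sesq_cols: assumes A: "A \<in> carrier_mat n n" and X: "X \<in> carrier_mat n k" and Y: "Y \<in> carrier_mat n k'"
  and c: "c < k" and d: "d < k'"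
  shows "sesq n A (colf X c) (colf Y d) = (adj X * A * Y) $$ (c,d)"
proof -
  have "(adj X * A * Y) $$ (c,d) = (\<Sum>l<n. cnj (X $$ (l,c)) * (\<Sum>la<n. A $$ (l,la) * Y $$ (la,d)))"
    using A X Y c d by (simp add: index_mult_mat_sum)
  also have "\<dots> = sesq n A (colf X c) (colf Y d)"
    unfolding sesq_def colf_def by (simp add: sum_distrib_left mult.assoc)
  finally show ?thesis by simp
qed

definition col_mat :: "nat \<Rightarrow> (nat \<Rightarrow> complex) \<Rightarrow> complex mat" where
  "col_mat n v = mat n 1 (\<lambda>(i,j). v i)"

lemma col_mat_carrier[simp]: "col_mat n v \<in> carrier_mat n 1" "col_mat n v \<in> carrier_mat n (Suc 0)" by (auto simp: col_mat_def)

lemma col_mat_dims[simp]: "dim_row (col_mat n v) = n" "dim_col (col_mat n v) = 1" by (auto simp: col_mat_def)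

lemma sesq_col_mat: "A \<in> carrier_mat n n \<Longrightarrow> sesq n A x y = (adj (col_mat n x) * A * col_mat n y) $$ (0,0)"
proof -
  assume A: "A \<in> carrier_mat n n"
  have "sesq n A x y = sesq n A (colf (col_mat n x) 0) (colf (col_mat n y) 0)"
    unfolding sesq_def colf_def col_mat_def by (intro sum.cong refl) auto
  also have "\<dots> = (adj (col_mat n x) * A * col_mat n y) $$ (0,0)"
    using A by (intro sesq_cols[of A n "col_mat n x" 1 "col_mat n y" 1 0 0]) auto
  finally show ?thesis .
qed

lemma sesq_congruence: assumes A: "A \<in> carrier_mat k k" and X: "X \<in> carrier_mat k n"
  shows "sesq n (adj X * A * X) x y = sesq k A (colf (X * col_mat n x) 0) (colf (X * col_mat n y) 0)"
proof -
  have "sesq n (adj X * A * X) x y = (adj (col_mat n x) * (adj X * A * X) * col_mat n y) $$ (0,0)"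
    using A X by (intro sesq_col_mat) auto
  also have "adj (col_mat n x) * (adj X * A * X) * col_mat n y = adj (X * col_mat n x) * A * (X * col_mat n y)"
    using A X by (simp add: adj_mult[OF X col_mat_carrier(1)[of n x]])
  also have "\<dots> $$ (0,0) = sesq k A (colf (X * col_mat n x) 0) (colf (X * col_mat n y) 0)"
    using A X by (intro sesq_cols[symmetric, of A k "X * col_mat n x" 1 "X * col_mat n y" 1 0 0]) auto
  finally show ?thesis .
qed

lemma psd_congruence: assumes P: "psd k A" and X: "X \<in> carrier_mat k n"
  shows "psd n (adj X * A * X)"
  unfolding psd_iff_sesq
  using sesq_congruence[OF psdD(3)[OF P] X] psdD[OF P] X P by (auto simp: psd_iff_sesq)

lemma psd_one: "psd n (1\<^sub>m n)"
  unfolding psd_iff_sesq sesq_one cnj_mult_self by (auto simp: sum_nonneg)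

lemma psd_gram: "X \<in> carrier_mat k n \<Longrightarrow> psd n (adj X * X)"
  using psd_congruence[OF psd_one, of X k n] by simp

lemma psd_add: "psd n A \<Longrightarrow> psd n B \<Longrightarrow> psd n (A + B)"
  unfolding psd_iff_sesq by (auto simp: sesq_add_mat)

lemma psd_smult: "psd n A \<Longrightarrow> 0 \<le> r \<Longrightarrow> psd n (complex_of_real r \<cdot>\<^sub>m A)"
  unfolding psd_iff_sesq by (auto simp: sesq_smult_mat)

lemma psd_real_diag: assumes d: "\<And>i. i < n \<Longrightarrow> 0 \<le> d i" shows "psd n (real_diag n d)"
proof -
  have "adj (real_diag n (\<lambda>i. sqrt (d i))) * real_diag n (\<lambda>i. sqrt (d i)) = real_diag n d"
    using d by (simp add: real_diag_mult) (rule real_diag_cong, simp)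
  then show ?thesis using psd_gram[of "real_diag n (\<lambda>i. sqrt (d i))" n n] by simp
qed

lemma psd_unitary_diag: assumes U: "unitary n U" and d: "\<And>i. i < n \<Longrightarrow> 0 \<le> d i"
  shows "psd n (U * real_diag n d * adj U)"
proof -
  have Uc: "U \<in> carrier_mat n n" using unitaryD(1)[OF U] .
  have Dp: "psd n (real_diag n d)" using psd_real_diag d by blast
  have "psd n (adj (adj U) * real_diag n d * adj U)" using psd_congruence[OF Dp, where X="adj U" and n=n] Uc by simp
  then show ?thesis by simp
qed

lemma psd_of_sesq_square: "A \<in> carrier_mat n n \<Longrightarrow> (\<And>x. \<exists>z. sesq n A x x = cnj z * z) \<Longrightarrow> psd n A"
  unfolding psd_iff_sesq by (metis cnj_mult_self Im_complex_of_real Re_complex_of_real zero_le_power2)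

lemma psd_diag_nonneg: "psd n A \<Longrightarrow> i < n \<Longrightarrow> Im (A $$ (i,i)) = 0 \<and> 0 \<le> Re (A $$ (i,i))"
  using psdD(1,2)[of n A "\<lambda>l. if l = i then 1 else 0"] sesq_delta[of i n i A 1 1] by auto

text \<open>Polarisation: the test vectors \<open>e\<^sub>i + b e\<^sub>j\<close> with \<open>b = 1\<close> and \<open>b = \<i>\<close> show that
  \<open>A\<^sub>i\<^sub>j + A\<^sub>j\<^sub>i\<close> is real and \<open>A\<^sub>i\<^sub>j - A\<^sub>j\<^sub>i\<close> is imaginary.\<close>

lemma psd_hermitian: assumes P: "psd n A" shows "adj A = A"
proof (rule eq_matI)
  have A: "A \<in> carrier_mat n n" using psdD(3)[OF P] .
  fix i j assume "i < dim_row A" "j < dim_col A"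
  then have i: "i < n" and j: "j < n" using A by auto
  show "adj A $$ (i,j) = A $$ (i,j)"
  proof (cases "i = j")
    case True then show ?thesis using psd_diag_nonneg[OF P i] i A by (simp add: complex_eq_iff)
  next
    case False
    define e :: "nat \<Rightarrow> complex \<Rightarrow> nat \<Rightarrow> complex" where "e = (\<lambda>k b l. if l = k then b else 0)"
    have form: "sesq n A (\<lambda>l. e i 1 l + e j b l) (\<lambda>l. e i 1 l + e j b l) =
        A $$ (i,i) + A $$ (i,j) * b + cnj b * A $$ (j,i) + cnj b * A $$ (j,j) * b" for b
      unfolding sesq_add_left sesq_add_right e_def using sesq_delta i j by simp
    have real: "Im (sesq n A (\<lambda>l. e i 1 l + e j b l) (\<lambda>l. e i 1 l + e j b l)) = 0" for b using psdD(1)[OF P] .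
    have diag: "Im (A $$ (i,i)) = 0" "Im (A $$ (j,j)) = 0" using psd_diag_nonneg[OF P] i j by auto
    have "Im (A $$ (i,j) + A $$ (j,i)) = 0" using real[of 1] form[of 1] diag by simp
    moreover have "Re (A $$ (i,j) - A $$ (j,i)) = 0"
      using real[of "\<i>"] form[of "\<i>"] diag by (simp add: algebra_simps)
    ultimately show ?thesis using i j A by (simp add: complex_eq_iff)
  qed
qed (use psdD(3)[OF assms] in auto)

lemma psd_trace_nonneg: "psd n A \<Longrightarrow> Im (mtrace A) = 0 \<and> 0 \<le> Re (mtrace A)"
proof -
  assume P: "psd n A"
  have "dim_row A = n" using psdD(3)[OF P] by auto
  then show ?thesis
    unfolding mtrace_def using psd_diag_nonneg[OF P] by (auto simp: Re_sum Im_sum intro!: sum_nonneg)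
qed

lemma psd_trace_real_eq: "psd n A \<Longrightarrow> mtrace A = complex_of_real (Re (mtrace A))"
  using psd_trace_nonneg[of n A] by (simp add: complex_eq_iff)

lemma gram_diag_zero_imp_zero: assumes X: "X \<in> carrier_mat k n" and z: "\<And>j. j < n \<Longrightarrow> (adj X * X) $$ (j,j) = 0"
  shows "X = 0\<^sub>m k n"
proof (rule eq_matI)
  fix i j assume "i < dim_row (0\<^sub>m k n)" "j < dim_col (0\<^sub>m k n)"
  then have i: "i < k" and j: "j < n" by auto
  have "(adj X * X) $$ (j,j) = (\<Sum>l<k. complex_of_real ((cmod (X $$ (l,j)))^2))"
    using X j by (simp add: index_mult_mat_sum cnj_mult_self)
  then have "(\<Sum>l<k. (cmod (X $$ (l,j)))^2) = 0" using z[OF j]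
    by (metis of_real_eq_0_iff of_real_sum)
  then have "(cmod (X $$ (i,j)))^2 = 0" using i by (subst (asm) sum_nonneg_eq_0_iff) auto
  then show "X $$ (i,j) = 0\<^sub>m k n $$ (i,j)" using i j by simp
qed (use X in auto)

lemma sesq_split: "sesq (2*k) M y y = sesq k (blk k M 0 0) y y + sesq k (blk k M 0 1) y (\<lambda>r. y (k+r))
   + sesq k (blk k M 1 0) (\<lambda>r. y (k+r)) y + sesq k (blk k M 1 1) (\<lambda>r. y (k+r)) (\<lambda>r. y (k+r))"
  unfolding sesq_def by (simp add: sum_lessThan_double sum.distrib)

lemma sesq_blocks: "sesq (k*n) Z x y = (\<Sum>b<k. \<Sum>c<k. sesq n (blk n Z b c) (\<lambda>j. x (b*n+j)) (\<lambda>m. y (c*n+m)))"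
  unfolding sesq_def sum_lessThan_mult
proof (rule sum.cong[OF refl])
  fix b assume b: "b \<in> {..<k}"
  show "(\<Sum>j<n. \<Sum>c<k. \<Sum>m<n. cnj (x (b*n+j)) * Z $$ (b*n+j, c*n+m) * y (c*n+m)) =
        (\<Sum>c<k. \<Sum>j<n. \<Sum>m<n. cnj (x (b*n+j)) * blk n Z b c $$ (j, m) * y (c*n+m))"
    by (subst sum.swap) (auto intro!: sum.cong)
qed

section \<open>The spectral theorem for Hermitian matrices\<close>

lemma hermitian_index: "adj A = A \<Longrightarrow> A \<in> carrier_mat n n \<Longrightarrow> i < n \<Longrightarrow> j < n \<Longrightarrow> A $$ (j,i) = cnj (A $$ (i,j))"
  by (metis index_adj carrier_matD(1) carrier_matD(2))

lemma unitary_orthonormal: assumes U: "unitary n U" and i: "i < n" and j: "j < n"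
  shows "(\<Sum>l<n. cnj (U $$ (l,i)) * U $$ (l,j)) = (if i = j then 1 else 0)"
    "(\<Sum>l<n. U $$ (i,l) * cnj (U $$ (j,l))) = (if i = j then 1 else 0)"
proof -
  have C: "U \<in> carrier_mat n n" "adj U * U = 1\<^sub>m n" "U * adj U = 1\<^sub>m n" using unitaryD[OF U] by auto
  have "(\<Sum>l<n. cnj (U $$ (l,i)) * U $$ (l,j)) = (adj U * U) $$ (i,j)" using C(1) i j by (simp add: index_mult_mat_sum)
  then show "(\<Sum>l<n. cnj (U $$ (l,i)) * U $$ (l,j)) = (if i = j then 1 else 0)" using C(2) i j by simp
  have "(\<Sum>l<n. U $$ (i,l) * cnj (U $$ (j,l))) = (U * adj U) $$ (i,j)" using C(1) i j by (simp add: index_mult_mat_sum)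
  then show "(\<Sum>l<n. U $$ (i,l) * cnj (U $$ (j,l))) = (if i = j then 1 else 0)" using C(3) i j by simp
qed

lemma unitaryI: assumes C: "U \<in> carrier_mat n n"
  and e1: "\<And>i j. i < n \<Longrightarrow> j < n \<Longrightarrow> (\<Sum>l<n. cnj (U $$ (l,i)) * U $$ (l,j)) = (if i = j then 1 else 0)"
  and e2: "\<And>i j. i < n \<Longrightarrow> j < n \<Longrightarrow> (\<Sum>l<n. U $$ (i,l) * cnj (U $$ (j,l))) = (if i = j then 1 else 0)"
  shows "unitary n U"
  unfolding unitary_def
proof (intro conjI C)
  show "adj U * U = 1\<^sub>m n" by (rule eq_matI) (use C e1 in \<open>auto simp: index_mult_mat_sum\<close>)
  show "U * adj U = 1\<^sub>m n" by (rule eq_matI) (use C e2 in \<open>auto simp: index_mult_mat_sum\<close>)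
qed

lemma unit_eigenvector_exists:
  assumes A: "A \<in> carrier_mat n n" and n: "0 < n"
  shows "\<exists>\<mu> u. (\<Sum>i<n. cnj (u i) * u i) = 1 \<and> (\<forall>i<n. (\<Sum>j<n. A $$ (i,j) * u j) = \<mu> * u i)"
proof -
  obtain \<mu> where "\<mu> \<in> spectrum A" using spectrum_non_empty[OF A n] by blast
  then obtain w where w: "eigenvector A w \<mu>" unfolding spectrum_def eigenvalue_def by auto
  have wc: "w \<in> carrier_vec n" and w0: "w \<noteq> 0\<^sub>v n" and ev: "A *\<^sub>v w = \<mu> \<cdot>\<^sub>v w"
    using w A unfolding eigenvector_def by auto
  obtain i0 where i0: "i0 < n" "w $ i0 \<noteq> 0"
    using w0 wc by (metis eq_vecI carrier_vecD index_zero_vec(1,2))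
  define S where "S = (\<Sum>i<n. (cmod (w $ i))^2)"
  have "0 < (cmod (w $ i0))^2" using i0 by simp
  also have "\<dots> \<le> S" unfolding S_def using i0 by (intro member_le_sum) auto
  finally have S: "0 < S" .
  define u where "u = (\<lambda>i. w $ i / complex_of_real (sqrt S))"
  have "cnj (u i) * u i = complex_of_real ((cmod (w $ i))^2 / S)" for i
    unfolding u_def cnj_mult_self using S by (simp add: norm_divide power_divide)
  then have "(\<Sum>i<n. cnj (u i) * u i) = complex_of_real (\<Sum>i<n. (cmod (w $ i))^2 / S)" by simp
  also have "(\<Sum>i<n. (cmod (w $ i))^2 / S) = 1" using S by (simp add: sum_divide_distrib[symmetric] S_def)
  finally have u1: "(\<Sum>i<n. cnj (u i) * u i) = 1" by simp
  have "(\<Sum>j<n. A $$ (i,j) * u j) = \<mu> * u i" if i: "i < n" for i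
  proof -
    have "(\<Sum>j<n. A $$ (i,j) * w $ j) = \<mu> * w $ i"
      using arg_cong[OF ev, of "\<lambda>v. v $ i"] i A wc by (simp add: scalar_prod_def atLeast0LessThan)
    then show ?thesis unfolding u_def by (simp add: sum_divide_distrib[symmetric])
  qed
  with u1 show ?thesis by blast
qed

definition householder :: "nat \<Rightarrow> complex \<Rightarrow> (nat \<Rightarrow> complex) \<Rightarrow> complex mat" where
  "householder n \<kappa> w = mat n n (\<lambda>(i,j). (if i = j then 1 else 0) - \<kappa> * w i * cnj (w j))"

lemma householder_unitary:
  assumes real: "cnj \<kappa> = \<kappa>" and norm: "\<kappa> * \<kappa> * (\<Sum>l<n. cnj (w l) * w l) = 2 * \<kappa>"
  shows "unitary n (householder n \<kappa> w)"
proof -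
  define H where "H = householder n \<kappa> w"
  have Hc: "H \<in> carrier_mat n n" unfolding H_def householder_def by simp
  have Hh: "adj H = H" by (rule eq_matI) (auto simp: H_def householder_def real)
  have "H * H = 1\<^sub>m n"
  proof (rule eq_matI)
    fix i j assume "i < dim_row (1\<^sub>m n)" "j < dim_col (1\<^sub>m n)"
    then have i: "i < n" and j: "j < n" by auto
    have e: "((if i = l then 1 else 0) - \<kappa> * w i * cnj (w l)) * ((if l = j then 1 else 0) - \<kappa> * w l * cnj (w j))
      = (if i = l then (if l = j then 1 else 0) else 0) - (if i = l then \<kappa> * w l * cnj (w j) else 0)
        - (if l = j then \<kappa> * w i * cnj (w l) else 0) + (w i * cnj (w j)) * (\<kappa> * \<kappa> * (cnj (w l) * w l))" for l
      by (auto simp: algebra_simps)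
    have "(H * H) $$ (i,j) = (\<Sum>l<n. ((if i = l then 1 else 0) - \<kappa> * w i * cnj (w l)) * ((if l = j then 1 else 0) - \<kappa> * w l * cnj (w j)))"
      using i j Hc by (simp add: index_mult_mat_sum H_def householder_def)
    also have "\<dots> = (if i = j then 1 else 0) - 2 * \<kappa> * w i * cnj (w j) + (w i * cnj (w j)) * (\<kappa> * \<kappa> * (\<Sum>l<n. cnj (w l) * w l))"
      unfolding e using i j by (simp add: sum.distrib sum_subtractf sum_distrib_left)
    also have "\<dots> = (if i = j then 1 else 0)" unfolding norm by (simp add: algebra_simps)
    finally show "(H * H) $$ (i,j) = 1\<^sub>m n $$ (i,j)" using i j by simp
  qed (use Hc in auto)
  then show ?thesis unfolding unitary_def H_def[symmetric] using Hc Hh by simp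
qed

text \<open>The reflection along \<open>w = u - \<alpha> e\<^sub>0\<close>, with \<open>\<alpha>\<close> the phase of \<open>u 0\<close>, maps \<open>e\<^sub>0\<close> to \<open>\<alpha>\<^sup>* u\<close>.\<close>

lemma householder_first_column:
  assumes n: "0 < n" and u: "(\<Sum>i<n. cnj (u i) * u i) = 1"
    and aa: "cnj \<alpha> * \<alpha> = 1" and u0: "u 0 = complex_of_real r * \<alpha>"
    and w: "w = (\<lambda>i. u i - (if i = 0 then \<alpha> else 0))" and c: "c = (\<Sum>i<n. cnj (w i) * w i)" and c0: "c \<noteq> 0"
  shows "unitary n (householder n (2 / c) w) \<and> (\<forall>i<n. householder n (2 / c) w $$ (i,0) = cnj \<alpha> * u i)"
proof -
  have wi: "cnj (w i) * w i = cnj (u i) * u i - (if i = 0 then cnj (u 0) * \<alpha> + cnj \<alpha> * u 0 - cnj \<alpha> * \<alpha> else 0)" for i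
    unfolding w by (auto simp: algebra_simps)
  have cu0: "cnj (u 0) * \<alpha> = complex_of_real r" "cnj \<alpha> * u 0 = complex_of_real r"
    unfolding u0 using aa by (auto simp: ac_simps)
  have cr: "c = complex_of_real (2 - 2 * r)"
    unfolding c wi sum_subtractf using n u by (simp add: cu0 aa)
  have "2 / c * (2 / c) * c = 2 * (2 / c)" using c0 by (simp add: field_simps)
  then have unit: "unitary n (householder n (2 / c) w)"
    by (intro householder_unitary) (simp_all add: cr c[symmetric])
  have w0: "cnj (w 0) = complex_of_real (r - 1) * cnj \<alpha>"
    unfolding w using u0 by (simp add: algebra_simps)
  have "r \<noteq> 1" using c0 cr by auto
  then have \<kappa>w0: "2 / c * cnj (w 0) = - cnj \<alpha>"
    unfolding cr w0 by (simp add: field_simps)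
  have "householder n (2 / c) w $$ (i,0) = cnj \<alpha> * u i" if i: "i < n" for i
  proof -
    have "householder n (2 / c) w $$ (i,0) = (if i = 0 then 1 else 0) - w i * (2 / c * cnj (w 0))"
      using i n unfolding householder_def by (simp add: ac_simps)
    also have "\<dots> = cnj \<alpha> * u i" unfolding \<kappa>w0 unfolding w using aa by (auto simp: algebra_simps)
    finally show ?thesis .
  qed
  with unit show ?thesis by blast
qed

lemma unitary_first_column:
  assumes n: "0 < n" and u: "(\<Sum>i<n. cnj (u i) * u i) = 1"
  shows "\<exists>H \<beta>. unitary n H \<and> (\<forall>i<n. H $$ (i,0) = \<beta> * u i)"
proof -
  define r where "r = cmod (u 0)"
  define \<alpha> where "\<alpha> = (if u 0 = 0 then 1 else u 0 / complex_of_real r)"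
  have aa: "cnj \<alpha> * \<alpha> = 1"
    unfolding \<alpha>_def r_def by (auto simp: cnj_mult_self norm_divide)
  have u0: "u 0 = complex_of_real r * \<alpha>"
    unfolding \<alpha>_def r_def by auto
  define w where "w = (\<lambda>i. u i - (if i = 0 then \<alpha> else 0))"
  define c where "c = (\<Sum>i<n. cnj (w i) * w i)"
  show ?thesis
  proof (cases "c = 0")
    case True
    have "(\<Sum>i<n. (cmod (w i))^2) = 0"
      using True unfolding c_def cnj_mult_self of_real_sum[symmetric] of_real_eq_0_iff .
    then have "w i = 0" if "i < n" for i using that by (subst (asm) sum_nonneg_eq_0_iff) auto
    then have "\<forall>i<n. 1\<^sub>m n $$ (i,0) = cnj \<alpha> * u i"
      using n aa unfolding w_def by (auto simp: algebra_simps)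
    moreover have "unitary n (1\<^sub>m n)" unfolding unitary_def by simp
    ultimately show ?thesis by blast
  next
    case False
    then show ?thesis using householder_first_column[OF n u aa u0 w_def c_def] by blast
  qed
qed

text \<open>Conjugating by a unitary whose first column is an eigenvector splits off a \<open>1 \<times> 1\<close> block;
  the eigenvalue is real because the matrix is Hermitian.\<close>

lemma unitary_deflation:
  assumes A: "A \<in> carrier_mat n n" and h: "adj A = A" and n: "0 < n"
  shows "\<exists>H \<mu>. unitary n H \<and> (\<forall>i<n.
    (adj H * A * H) $$ (i,0) = (if i = 0 then complex_of_real \<mu> else 0) \<and>
    (adj H * A * H) $$ (0,i) = (if i = 0 then complex_of_real \<mu> else 0))"
proof -
  obtain \<mu> u where u: "(\<Sum>i<n. cnj (u i) * u i) = 1" and ev: "\<forall>i<n. (\<Sum>j<n. A $$ (i,j) * u j) = \<mu> * u i"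
    using unit_eigenvector_exists[OF A n] by blast
  obtain H \<beta> where H: "unitary n H" and col: "\<forall>i<n. H $$ (i,0) = \<beta> * u i"
    using unitary_first_column[OF n u] by blast
  have Hc: "H \<in> carrier_mat n n" using unitaryD[OF H] by simp
  define B where "B = adj H * A * H"
  have Bc: "B \<in> carrier_mat n n" unfolding B_def using Hc A by simp
  have Bh: "adj B = B" unfolding B_def using Hc A h by simp
  have AH: "(A * H) $$ (l,0) = \<mu> * H $$ (l,0)" if l: "l < n" for l
  proof -
    have "(A * H) $$ (l,0) = (\<Sum>m<n. A $$ (l,m) * H $$ (m,0))" using l n A Hc by (simp add: index_mult_mat_sum)
    also have "\<dots> = \<beta> * (\<Sum>m<n. A $$ (l,m) * u m)" using col by (simp add: sum_distrib_left ac_simps)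
    also have "\<dots> = \<mu> * H $$ (l,0)" using ev col l by simp
    finally show ?thesis .
  qed
  have B0: "B $$ (i,0) = (if i = 0 then \<mu> else 0)" if i: "i < n" for i
  proof -
    have "B $$ (i,0) = (\<Sum>l<n. cnj (H $$ (l,i)) * (A * H) $$ (l,0))"
      unfolding B_def using Hc A i n by (simp add: index_mult_mat_sum)
    also have "\<dots> = \<mu> * (\<Sum>l<n. cnj (H $$ (l,i)) * H $$ (l,0))"
      using AH by (simp add: sum_distrib_left ac_simps)
    also have "\<dots> = \<mu> * (if i = 0 then 1 else 0)" using unitary_orthonormal(1)[OF H i n] by simp
    finally show ?thesis by simp
  qed
  have real: "\<mu> = complex_of_real (Re \<mu>)"
    using hermitian_index[OF Bh Bc n n] B0[OF n] by (simp add: complex_eq_iff)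
  have B0': "B $$ (0,j) = (if j = 0 then \<mu> else 0)" if j: "j < n" for j
    using hermitian_index[OF Bh Bc j n] B0[OF j] real by (auto simp: complex_eq_iff)
  show ?thesis
    by (rule exI[of _ H], rule exI[of _ "Re \<mu>"]) (use H B0 B0' real in \<open>simp add: B_def\<close>)
qed

definition one_oplus :: "complex mat \<Rightarrow> complex mat" where
  "one_oplus U = mat (Suc (dim_row U)) (Suc (dim_col U))
     (\<lambda>(i,j). if i = 0 \<and> j = 0 then 1 else if i = 0 \<or> j = 0 then 0 else U $$ (i - 1, j - 1))"

lemma one_oplus_carrier: "U \<in> carrier_mat k k \<Longrightarrow> one_oplus U \<in> carrier_mat (Suc k) (Suc k)"
  unfolding one_oplus_def by auto

lemma unitary_one_oplus: assumes U: "unitary k U" shows "unitary (Suc k) (one_oplus U)"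
proof (rule unitaryI)
  have Uc: "U \<in> carrier_mat k k" using unitaryD[OF U] by simp
  then show G: "one_oplus U \<in> carrier_mat (Suc k) (Suc k)" by (rule one_oplus_carrier)
  fix i j assume i: "i < Suc k" and j: "j < Suc k"
  show "(\<Sum>l<Suc k. cnj (one_oplus U $$ (l,i)) * one_oplus U $$ (l,j)) = (if i = j then 1 else 0)"
    unfolding sum.lessThan_Suc_shift using i j Uc unitary_orthonormal(1)[OF U, of "i - 1" "j - 1"]
    by (cases i; cases j) (auto simp: one_oplus_def)
  show "(\<Sum>l<Suc k. one_oplus U $$ (i,l) * cnj (one_oplus U $$ (j,l))) = (if i = j then 1 else 0)"
    unfolding sum.lessThan_Suc_shift using i j Uc unitary_orthonormal(2)[OF U, of "i - 1" "j - 1"]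
    by (cases i; cases j) (auto simp: one_oplus_def)
qed

lemma index_one_oplus_diag:
  assumes U: "U \<in> carrier_mat k k" and i: "i < Suc k" and j: "j < Suc k"
  shows "(one_oplus U * real_diag (Suc k) d * adj (one_oplus U)) $$ (i,j) =
    (if i = 0 \<or> j = 0 then (if i = j then complex_of_real (d 0) else 0)
     else (U * real_diag k (\<lambda>l. d (Suc l)) * adj U) $$ (i - 1, j - 1))"
proof -
  have "(one_oplus U * real_diag (Suc k) d * adj (one_oplus U)) $$ (i,j) =
      (\<Sum>l<Suc k. one_oplus U $$ (i,l) * complex_of_real (d l) * cnj (one_oplus U $$ (j,l)))"
    by (rule index_unitary_diag[OF one_oplus_carrier[OF U] i j])
  also have "\<dots> = one_oplus U $$ (i,0) * complex_of_real (d 0) * cnj (one_oplus U $$ (j,0)) +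
      (\<Sum>l<k. one_oplus U $$ (i,Suc l) * complex_of_real (d (Suc l)) * cnj (one_oplus U $$ (j,Suc l)))"
    by (rule sum.lessThan_Suc_shift)
  also have "\<dots> = (if i = 0 \<or> j = 0 then (if i = j then complex_of_real (d 0) else 0)
     else (U * real_diag k (\<lambda>l. d (Suc l)) * adj U) $$ (i - 1, j - 1))"
    using i j U by (cases i; cases j) (auto simp: one_oplus_def index_unitary_diag simp del: index_mult_mat_sum' assoc_mult_mat')
  finally show ?thesis .
qed

lemma hermitian_minor:
  assumes Bh: "adj B = B" and Bc: "B \<in> carrier_mat (Suc k) (Suc k)"
  shows "adj (mat k k (\<lambda>(i,j). B $$ (Suc i, Suc j))) = mat k k (\<lambda>(i,j). B $$ (Suc i, Suc j))"
proof (rule eq_matI)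
  fix i j assume "i < dim_row (mat k k (\<lambda>(i,j). B $$ (Suc i, Suc j)))" "j < dim_col (mat k k (\<lambda>(i,j). B $$ (Suc i, Suc j)))"
  then show "adj (mat k k (\<lambda>(i,j). B $$ (Suc i, Suc j))) $$ (i,j) = mat k k (\<lambda>(i,j). B $$ (Suc i, Suc j)) $$ (i,j)"
    using hermitian_index[OF Bh Bc, of "Suc j" "Suc i"] by simp
qed auto

lemma one_oplus_decomposition:
  assumes Bc: "B \<in> carrier_mat (Suc k) (Suc k)" and U: "U \<in> carrier_mat k k"
    and B0: "\<forall>i<Suc k. B $$ (i,0) = (if i = 0 then complex_of_real \<mu> else 0) \<and>
      B $$ (0,i) = (if i = 0 then complex_of_real \<mu> else 0)"
    and minor: "mat k k (\<lambda>(i,j). B $$ (Suc i, Suc j)) = U * real_diag k d * adj U"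
  shows "B = one_oplus U * real_diag (Suc k) (\<lambda>i. if i = 0 then \<mu> else d (i - 1)) * adj (one_oplus U)"
    (is "B = ?G * real_diag (Suc k) ?e * adj ?G")
proof (rule eq_matI)
  fix i j assume "i < dim_row (?G * real_diag (Suc k) ?e * adj ?G)" "j < dim_col (?G * real_diag (Suc k) ?e * adj ?G)"
  then have i: "i < Suc k" and j: "j < Suc k" using one_oplus_carrier[OF U] by auto
  show "B $$ (i,j) = (?G * real_diag (Suc k) ?e * adj ?G) $$ (i,j)"
  proof (cases "i = 0 \<or> j = 0")
    case True
    then show ?thesis unfolding index_one_oplus_diag[OF U i j] using B0 i j by auto
  next
    case False
    then obtain i' j' where ij: "i = Suc i'" "j = Suc j'" by (cases i; cases j) auto
    have "real_diag k (\<lambda>l. ?e (Suc l)) = real_diag k d" by simp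
    then have "(?G * real_diag (Suc k) ?e * adj ?G) $$ (i,j) = mat k k (\<lambda>(i,j). B $$ (Suc i, Suc j)) $$ (i',j')"
      unfolding index_one_oplus_diag[OF U i j] minor using False ij by simp
    then show ?thesis using ij i j by simp
  qed
qed (use one_oplus_carrier[OF U] Bc in auto)

lemma spectral_decomposition:
  "A \<in> carrier_mat n n \<Longrightarrow> adj A = A \<Longrightarrow> \<exists>U d. unitary n U \<and> A = U * real_diag n d * adj U"
proof (induction n arbitrary: A)
  case 0
  have "unitary 0 (1\<^sub>m 0)" unfolding unitary_def by simp
  moreover have "A = 1\<^sub>m 0 * real_diag 0 (\<lambda>_. 0) * adj (1\<^sub>m 0)" by (rule eq_matI) (use "0.prems" in auto)
  ultimately show ?case by blast
next
  case (Suc k)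
  have A: "A \<in> carrier_mat (Suc k) (Suc k)" and h: "adj A = A" by fact+
  obtain H \<mu> where H: "unitary (Suc k) H" and B0: "\<forall>i<Suc k.
      (adj H * A * H) $$ (i,0) = (if i = 0 then complex_of_real \<mu> else 0) \<and>
      (adj H * A * H) $$ (0,i) = (if i = 0 then complex_of_real \<mu> else 0)"
    using unitary_deflation[OF A h] by blast
  have Hc: "H \<in> carrier_mat (Suc k) (Suc k)" using unitaryD[OF H] by simp
  define B where "B = adj H * A * H"
  have Bc: "B \<in> carrier_mat (Suc k) (Suc k)" unfolding B_def using Hc A by simp
  have Bh: "adj B = B" unfolding B_def using Hc A h by simp
  obtain U d where U: "unitary k U" and minor: "mat k k (\<lambda>(i,j). B $$ (Suc i, Suc j)) = U * real_diag k d * adj U"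
    using Suc.IH[OF _ hermitian_minor[OF Bh Bc]] by auto
  define e where "e = (\<lambda>i. if i = 0 then \<mu> else d (i - 1))"
  define G where "G = one_oplus U"
  have Gc: "G \<in> carrier_mat (Suc k) (Suc k)" unfolding G_def using one_oplus_carrier unitaryD[OF U] by simp
  have "A = H * B * adj H" unfolding B_def using Hc A unitaryD(3)[OF H] by simp
  also have "B = G * real_diag (Suc k) e * adj G"
    unfolding G_def e_def using one_oplus_decomposition[OF Bc unitaryD(1)[OF U] B0[folded B_def] minor] .
  also have "H * (G * real_diag (Suc k) e * adj G) * adj H = (H * G) * real_diag (Suc k) e * adj (H * G)"
    using Hc Gc by simp
  finally show ?case using unitary_mult[OF H unitary_one_oplus[OF U]] unfolding G_def by blast
qed

lemma spectral_decomposition_psd: assumes P: "psd n A"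
  shows "\<exists>U d. unitary n U \<and> (\<forall>i<n. 0 \<le> d i) \<and> A = U * real_diag n d * adj U"
proof -
  have A: "A \<in> carrier_mat n n" using psdD(3)[OF P] .
  obtain U d where U: "unitary n U" and Ad: "A = U * real_diag n d * adj U"
    using spectral_decomposition[OF A psd_hermitian[OF P]] by blast
  have Uc: "U \<in> carrier_mat n n" "adj U * U = 1\<^sub>m n" using unitaryD[OF U] by auto
  have "adj U * A * U = real_diag n d" unfolding Ad using Uc by simp
  then have "psd n (real_diag n d)" using psd_congruence[OF P Uc(1)] by simp
  then have "0 \<le> d i" if "i < n" for i using psd_diag_nonneg[OF _ that, of "real_diag n d"] that by (simp add: real_diag_def)
  then show ?thesis using U Ad by blast
qed

section \<open>Square roots, absolute values and polar decomposition\<close>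

lemma psd_sqrt_exists: assumes A: "psd n A" shows "\<exists>R. psd n R \<and> R * R = A"
proof -
  obtain U d where U: "unitary n U" and d: "\<forall>i<n. 0 \<le> d i" and Ad: "A = U * real_diag n d * adj U"
    using spectral_decomposition_psd[OF A] by blast
  define R where "R = U * real_diag n (\<lambda>i. sqrt (d i)) * adj U"
  have "psd n R" unfolding R_def by (rule psd_unitary_diag[OF U]) (use d in simp)
  moreover have "R * R = U * real_diag n (\<lambda>i. sqrt (d i) * sqrt (d i)) * adj U"
    unfolding R_def by (rule unitary_diag_mult[OF U])
  moreover have "real_diag n (\<lambda>i. sqrt (d i) * sqrt (d i)) = real_diag n d"
    using d by (intro real_diag_cong) simp
  ultimately show ?thesis using Ad by auto
qed

lemma square_eigen_defect:
  assumes Q: "Q \<in> carrier_mat n n" and U: "U \<in> carrier_mat n k"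
    and QQU: "Q * Q * U = U * real_diag k (\<lambda>j. d j * d j)"
  shows "Q * (Q * U - U * real_diag k d) = (Q * U - U * real_diag k d) * real_diag k (\<lambda>j. - d j)"
proof (rule eq_matI)
  fix l j assume "l < dim_row ((Q * U - U * real_diag k d) * real_diag k (\<lambda>j. - d j))"
    "j < dim_col ((Q * U - U * real_diag k d) * real_diag k (\<lambda>j. - d j))"
  then have lj: "l < n" "j < k" using U by auto
  have "(Q * (Q * U - U * real_diag k d)) $$ (l,j) = (U * real_diag k (\<lambda>i. d i * d i)) $$ (l,j) - (Q * U * real_diag k d) $$ (l,j)"
    using lj Q U by (simp add: mult_minus_distrib_mat' QQU[symmetric] del: index_mult_mat_sum')
  also have "\<dots> = U $$ (l,j) * complex_of_real (d j * d j) - (Q * U) $$ (l,j) * complex_of_real (d j)"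
    using lj Q U by (simp add: index_mult_real_diag' del: assoc_mult_mat' index_mult_mat_sum')
  also have "\<dots> = ((Q * U - U * real_diag k d) * real_diag k (\<lambda>j. - d j)) $$ (l,j)"
    using lj Q U by (simp add: index_mult_real_diag' algebra_simps del: assoc_mult_mat' index_mult_mat_sum')
  finally show "(Q * (Q * U - U * real_diag k d)) $$ (l,j) = ((Q * U - U * real_diag k d) * real_diag k (\<lambda>j. - d j)) $$ (l,j)" .
qed (use Q U in auto)

lemma index_conj_eigen:
  assumes Y: "Y \<in> carrier_mat n k" and Q: "Q \<in> carrier_mat n n" and QY: "Q * Y = Y * real_diag k e" and j: "j < k"
  shows "(adj Y * Q * Y) $$ (j,j) = complex_of_real (e j) * (adj Y * Y) $$ (j,j)"
proof -
  have "adj Y * Q * Y = (adj Y * Y) * real_diag k e" using Y Q by (simp add: QY)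
  then show ?thesis using Y j by (simp add: index_mult_real_diag[of "adj Y * Y" k k] del: assoc_mult_mat' index_mult_mat_sum')
qed

lemma index_gram_eigen_defect:
  assumes Q: "Q \<in> carrier_mat n n" and Qh: "adj Q = Q" and U: "U \<in> carrier_mat n k"
    and Y: "Y = Q * U - U * real_diag k d" and QY: "Q * Y = Y * real_diag k (\<lambda>j. - d j)" and j: "j < k"
  shows "(adj Y * Y) $$ (j,j) = - 2 * complex_of_real (d j) * (adj U * Y) $$ (j,j)"
proof -
  have Yc: "Y \<in> carrier_mat n k" unfolding Y using Q U by auto
  have Ye: "Y $$ (l,j) = (Q * U) $$ (l,j) - U $$ (l,j) * complex_of_real (d j)" if "l < n" for l
    unfolding Y using that j Q U by (simp add: index_mult_real_diag del: index_mult_mat_sum')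
  have QYe: "(Q * Y) $$ (l,j) = - (complex_of_real (d j) * Y $$ (l,j))" if "l < n" for l
    unfolding QY using that j Yc by (simp add: index_mult_real_diag del: index_mult_mat_sum')
  have "(adj Y * Y) $$ (j,j) = (\<Sum>l<n. cnj (Y $$ (l,j)) * Y $$ (l,j))" using Yc j by (simp add: index_mult_mat_sum)
  also have "\<dots> = (\<Sum>l<n. cnj ((Q * U) $$ (l,j)) * Y $$ (l,j)) - complex_of_real (d j) * (\<Sum>l<n. cnj (U $$ (l,j)) * Y $$ (l,j))"
    by (simp add: Ye sum_subtractf sum_distrib_left algebra_simps)
  also have "(\<Sum>l<n. cnj ((Q * U) $$ (l,j)) * Y $$ (l,j)) = (adj (Q * U) * Y) $$ (j,j)"
    using Yc Q U j by (subst index_mult_mat_sum[of "adj (Q*U)" k n Y k]) (auto simp del: adj_mult' index_mult_mat_sum')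
  also have "\<dots> = (adj U * (Q * Y)) $$ (j,j)" using Q U Yc Qh by simp
  also have "\<dots> = (\<Sum>l<n. cnj (U $$ (l,j)) * (Q * Y) $$ (l,j))"
    using Yc Q U j by (subst index_mult_mat_sum[of _ k n _ k]) auto
  also have "\<dots> = - complex_of_real (d j) * (\<Sum>l<n. cnj (U $$ (l,j)) * Y $$ (l,j))"
    by (simp add: QYe sum_distrib_left algebra_simps flip: sum_negf)
  also have "(\<Sum>l<n. cnj (U $$ (l,j)) * Y $$ (l,j)) = (adj U * Y) $$ (j,j)"
    using Yc U j by (simp add: index_mult_mat_sum)
  finally show ?thesis by simp
qed

text \<open>For \<open>Y = Q U - U D\<close> one gets \<open>Q Y = - Y D\<close>, so the diagonal of the positive matrix
  \<open>Y\<^sup>\<dagger> Q Y\<close> is \<open>- d\<^sub>j (Y\<^sup>\<dagger> Y)\<^sub>j\<^sub>j \<le> 0\<close>; this kills the columns of \<open>Y\<close> with \<open>d\<^sub>j > 0\<close>, while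
  \<open>(Y\<^sup>\<dagger> Y)\<^sub>j\<^sub>j = -2 d\<^sub>j (U\<^sup>\<dagger> Y)\<^sub>j\<^sub>j\<close> kills those with \<open>d\<^sub>j = 0\<close>.\<close>

lemma psd_eigen_of_square_eigen:
  assumes Q: "psd n Q" and U: "U \<in> carrier_mat n k" and d: "\<forall>j<k. 0 \<le> d j"
    and QQU: "Q * Q * U = U * real_diag k (\<lambda>j. d j * d j)"
  shows "Q * U = U * real_diag k d"
proof -
  have Qc: "Q \<in> carrier_mat n n" using psdD(3)[OF Q] .
  define Y where "Y = Q * U - U * real_diag k d"
  have Yc: "Y \<in> carrier_mat n k" unfolding Y_def using Qc U by auto
  have QY: "Q * Y = Y * real_diag k (\<lambda>j. - d j)" unfolding Y_def by (rule square_eigen_defect[OF Qc U QQU])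
  have "Y = 0\<^sub>m n k"
  proof (rule gram_diag_zero_imp_zero[OF Yc])
    fix j assume j: "j < k"
    show "(adj Y * Y) $$ (j,j) = 0"
    proof (cases "d j = 0")
      case True
      then show ?thesis using index_gram_eigen_defect[OF Qc psd_hermitian[OF Q] U Y_def QY j] by simp
    next
      case False
      then have dj: "0 < d j" using d j by force
      have a: "Im ((adj Y * Y) $$ (j,j)) = 0" "0 \<le> Re ((adj Y * Y) $$ (j,j))"
        using psd_diag_nonneg[OF psd_gram[OF Yc] j] by auto
      have "0 \<le> Re ((adj Y * Q * Y) $$ (j,j))" using psd_diag_nonneg[OF psd_congruence[OF Q Yc] j] by auto
      then have "0 \<le> - d j * Re ((adj Y * Y) $$ (j,j))" unfolding index_conj_eigen[OF Yc Qc QY j] using a by simp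
      then have "Re ((adj Y * Y) $$ (j,j)) \<le> 0" using dj by (simp add: mult_le_0_iff)
      then show ?thesis using a by (simp add: complex_eq_iff)
    qed
  qed
  show ?thesis
  proof (rule eq_matI)
    fix i j assume "i < dim_row (U * real_diag k d)" "j < dim_col (U * real_diag k d)"
    then have ij: "i < n" "j < k" using U by auto
    have "Y $$ (i,j) = 0" using \<open>Y = 0\<^sub>m n k\<close> ij by simp
    then show "(Q * U) $$ (i,j) = (U * real_diag k d) $$ (i,j)" unfolding Y_def using ij Qc U by simp
  qed (use Qc U in auto)
qed

lemma psd_sqrt_unique:
  assumes P: "psd n P" and Q: "psd n Q" and PQ: "P * P = Q * Q"
  shows "P = Q"
proof -
  obtain U d where U: "unitary n U" and d: "\<forall>i<n. 0 \<le> d i" and Pd: "P = U * real_diag n d * adj U"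
    using spectral_decomposition_psd[OF P] by blast
  have Uc: "U \<in> carrier_mat n n" "adj U * U = 1\<^sub>m n" "U * adj U = 1\<^sub>m n" using unitaryD[OF U] by auto
  have Qc: "Q \<in> carrier_mat n n" using psdD(3)[OF Q] .
  have "Q * Q * U = P * P * U" using PQ by simp
  also have "\<dots> = U * real_diag n (\<lambda>i. d i * d i) * adj U * U" unfolding Pd unitary_diag_mult[OF U] by simp
  also have "\<dots> = U * real_diag n (\<lambda>i. d i * d i)" using Uc by simp
  finally have QU: "Q * U = U * real_diag n d" by (rule psd_eigen_of_square_eigen[OF Q Uc(1) d])
  have "Q = Q * U * adj U" using Qc Uc by simp
  also have "\<dots> = P" unfolding QU Pd ..
  finally show ?thesis by simp
qed

lemma mat_abs_eq: assumes u: "u \<in> carrier_mat n n" and P: "psd n P" and PP: "P * P = adj u * u"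
  shows "mat_abs u = P"
  unfolding mat_abs_def
proof (rule the_equality)
  show "psd (dim_col u) P \<and> P * P = adj u * u" using u P PP by simp
  fix Q assume "psd (dim_col u) Q \<and> Q * Q = adj u * u"
  then show "Q = P" using psd_sqrt_unique[OF _ P, of Q] u PP by auto
qed

lemma psd_mat_abs: assumes u: "u \<in> carrier_mat n n"
  shows "psd n (mat_abs u)" and "mat_abs u * mat_abs u = adj u * u"
proof -
  obtain R where R: "psd n R" "R * R = adj u * u" using psd_sqrt_exists[OF psd_gram[OF u]] by blast
  then show "psd n (mat_abs u)" "mat_abs u * mat_abs u = adj u * u" using mat_abs_eq[OF u R] by auto
qed

lemma mat_abs_carrier: "u \<in> carrier_mat n n \<Longrightarrow> mat_abs u \<in> carrier_mat n n"
  using psdD(3)[OF psd_mat_abs(1)] .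

lemma mtrace_mat_abs: "u \<in> carrier_mat n n \<Longrightarrow> mtrace (mat_abs u) = complex_of_real (trace_norm u)"
  unfolding trace_norm_def using psd_trace_real_eq[OF psd_mat_abs(1)] by simp

lemma trace_norm_nonneg: "u \<in> carrier_mat n n \<Longrightarrow> 0 \<le> trace_norm u"
  unfolding trace_norm_def using psd_trace_nonneg[OF psd_mat_abs(1)] by simp

lemma trace_norm_psd: assumes A: "psd n A" shows "trace_norm A = Re (mtrace A)"
proof -
  have "mat_abs A = A" using mat_abs_eq[OF psdD(3)[OF A] A] psd_hermitian[OF A] by simp
  then show ?thesis unfolding trace_norm_def by simp
qed

lemma trace_norm_smult: assumes u: "u \<in> carrier_mat n n" shows "trace_norm (c \<cdot>\<^sub>m u) = cmod c * trace_norm u"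
proof -
  define P where "P = mat_abs u"
  have P: "psd n P" "P * P = adj u * u" using psd_mat_abs[OF u] unfolding P_def by auto
  have Pc: "P \<in> carrier_mat n n" using psdD(3)[OF P(1)] .
  have "(complex_of_real (cmod c) \<cdot>\<^sub>m P) * (complex_of_real (cmod c) \<cdot>\<^sub>m P) = complex_of_real ((cmod c)^2) \<cdot>\<^sub>m (P * P)"
    using Pc by (simp add: mult_smult_distrib' mult_smult_assoc_mat' smult_smult_mat power2_eq_square)
  also have "\<dots> = (cnj c * c) \<cdot>\<^sub>m (adj u * u)" using P(2) by (simp add: cnj_mult_self)
  also have "\<dots> = adj (c \<cdot>\<^sub>m u) * (c \<cdot>\<^sub>m u)"
    using u by (simp add: adj_smult mult_smult_distrib' mult_smult_assoc_mat' smult_smult_mat mult.commute)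
  finally have "mat_abs (c \<cdot>\<^sub>m u) = complex_of_real (cmod c) \<cdot>\<^sub>m P"
    using mat_abs_eq[OF smult_carrier_mat[OF u] psd_smult[OF P(1)]] by simp
  then show ?thesis unfolding trace_norm_def P_def using mtrace_smult[OF Pc] P_def by simp
qed

text \<open>\<open>P\<^sup>+\<close> inverts a positive \<open>P\<close> on its support, whose projection is \<open>S = P P\<^sup>+\<close>.\<close>

lemma psd_pseudo_inverse:
  assumes P: "psd n P"
  obtains Pp S where "Pp \<in> carrier_mat n n" "S \<in> carrier_mat n n" "adj Pp = Pp" "adj S = S"
    "P * Pp = S" "Pp * P = S" "S * P = P" "Pp * S = Pp"
proof -
  obtain U d where U: "unitary n U" and Pd: "P = U * real_diag n d * adj U"
    using spectral_decomposition_psd[OF P] by blast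
  have Uc: "U \<in> carrier_mat n n" using unitaryD[OF U] by simp
  define Pp where "Pp = U * real_diag n (\<lambda>i. if d i = 0 then 0 else 1 / d i) * adj U"
  define S where "S = U * real_diag n (\<lambda>i. if d i = 0 then 0 else 1) * adj U"
  show ?thesis
  proof
    show "Pp \<in> carrier_mat n n" "S \<in> carrier_mat n n" "adj Pp = Pp" "adj S = S"
      unfolding Pp_def S_def using Uc by simp_all
    show "P * Pp = S" "Pp * P = S" "S * P = P" "Pp * S = Pp"
      unfolding Pd Pp_def S_def unitary_diag_mult[OF U] by (rule unitary_diag_cong; simp)+
  qed
qed

lemma mult_support_projection:
  assumes u: "u \<in> carrier_mat n n" and P: "P \<in> carrier_mat n n" and PP: "P * P = adj u * u"
    and S: "S \<in> carrier_mat n n" and Sh: "adj S = S" and SP: "S * P = P"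
  shows "u * S = u"
proof -
  define S' where "S' = 1\<^sub>m n - S"
  have S'c: "S' \<in> carrier_mat n n" unfolding S'_def using S by (rule minus_carrier_mat)
  have S'P: "S' * P = 0\<^sub>m n n" unfolding S'_def using P S SP by (simp add: minus_mult_distrib_mat')
  have S'h: "adj S' = S'" unfolding S'_def using S Sh by (simp add: adj_minus[of _ n n])
  have "u * S' = 0\<^sub>m n n"
  proof (rule gram_diag_zero_imp_zero)
    show "u * S' \<in> carrier_mat n n" using u S'c by simp
    have "adj (u * S') * (u * S') = adj S' * ((adj u * u) * S')" using u S'c by simp
    also have "\<dots> = (S' * P) * (P * S')" unfolding PP[symmetric] S'h using P S'c by simp
    also have "\<dots> = 0\<^sub>m n n" unfolding S'P using P S'c by simp
    finally show "(adj (u * S') * (u * S')) $$ (j,j) = 0" if "j < n" for j using that by simp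
  qed
  then have "u - u * S = 0\<^sub>m n n" unfolding S'_def using u S by (simp add: mult_minus_distrib_mat')
  show "u * S = u"
  proof (rule eq_matI)
    fix i j assume "i < dim_row u" "j < dim_col u"
    moreover note arg_cong[OF \<open>u - u * S = 0\<^sub>m n n\<close>, of "\<lambda>M. M $$ (i,j)"]
    ultimately show "(u * S) $$ (i,j) = u $$ (i,j)" using u S by (simp del: index_mult_mat_sum')
  qed (use u S in auto)
qed

lemma polar_decomposition: assumes u: "u \<in> carrier_mat n n"
  shows "\<exists>W. W \<in> carrier_mat n n \<and> u = W * mat_abs u \<and> adj W * W * mat_abs u = mat_abs u \<and> W * adj W * W = W"
proof -
  define P where "P = mat_abs u"
  have P: "psd n P" "P * P = adj u * u" using psd_mat_abs[OF u] by (auto simp: P_def)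
  have Pc: "P \<in> carrier_mat n n" using psdD(3)[OF P(1)] .
  obtain Pp S where Ppc: "Pp \<in> carrier_mat n n" and Sc: "S \<in> carrier_mat n n"
    and hPp: "adj Pp = Pp" and hS: "adj S = S"
    and f1: "P * Pp = S" and f2: "Pp * P = S" and f3: "S * P = P" and f5: "Pp * S = Pp"
    using psd_pseudo_inverse[OF P(1)] by blast
  have f4: "P * S = P" using arg_cong[OF f3, of adj] Pc Sc hS psd_hermitian[OF P(1)] by simp
  have uu: "adj u * (u * X) = P * (P * X)" if X: "dim_row X = n" for X
  proof -
    have "adj u * (u * X) = (adj u * u) * X" using u X by simp
    also have "\<dots> = P * (P * X)" using P(2) Pc X by (metis assoc_mult_mat' carrier_matD)
    finally show ?thesis .
  qed
  define W where "W = u * Pp"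
  have Wc: "W \<in> carrier_mat n n" unfolding W_def using u Ppc by simp
  have "u = W * P" unfolding W_def using u Ppc Pc f2 mult_support_projection[OF u Pc P(2) Sc hS f3] by simp
  moreover have "adj W * W * P = P"
  proof -
    have "adj W * W * P = (Pp * P) * (P * (Pp * P))" unfolding W_def using u Ppc Pc hPp by (simp add: uu)
    then show ?thesis unfolding f2 f4 f3 .
  qed
  moreover have "W * adj W * W = W"
  proof -
    have "W * adj W * W = u * ((Pp * (Pp * P)) * (P * Pp))" unfolding W_def using u Ppc Pc hPp by (simp add: uu)
    then show ?thesis unfolding f2 f1 f5 W_def .
  qed
  ultimately show ?thesis using Wc unfolding P_def by blast
qed

lemma mtrace_mult_projection_le: assumes A: "psd n A" and Qc: "Q \<in> carrier_mat n n" and Qh: "adj Q = Q" and QQ: "Q * Q = Q"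
  shows "Re (mtrace (A * Q)) \<le> Re (mtrace A)"
proof -
  have Ac: "A \<in> carrier_mat n n" using psdD(3)[OF A] .
  define R where "R = 1\<^sub>m n - Q"
  have Rc: "R \<in> carrier_mat n n" unfolding R_def using Qc by (rule minus_carrier_mat)
  have Rh: "adj R = R" unfolding R_def using Qc Qh by (simp add: adj_minus[of _ n n])
  have RR: "R * R = R"
  proof -
    have "R * R = R - (Q - Q * Q)" unfolding R_def using Qc by (simp add: minus_mult_distrib_mat' mult_minus_distrib_mat')
    also have "\<dots> = R" unfolding QQ by (rule eq_matI) (use Rc Qc in auto)
    finally show ?thesis .
  qed
  have "mtrace A - mtrace (A * Q) = mtrace (A * R)"
    unfolding R_def using Ac Qc by (simp add: mult_minus_distrib_mat' mtrace_minus[of _ n])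
  also have "\<dots> = mtrace (A * R * R)" using Ac Rc RR by simp
  also have "\<dots> = mtrace (R * (A * R))" using mtrace_mult_commute[of "A * R" n n R] Ac Rc by simp
  also have "\<dots> = mtrace (adj R * A * R)" using Rh Ac Rc by simp
  finally have eq: "mtrace A - mtrace (A * Q) = mtrace (adj R * A * R)" .
  have "0 \<le> Re (mtrace (adj R * A * R))" using psd_trace_nonneg[OF psd_congruence[OF A Rc]] by simp
  then show ?thesis using arg_cong[OF eq, of Re] by simp
qed

section \<open>Operations contract the trace norm\<close>

text \<open>Testing \<open>M\<close> against \<open>(-X e\<^sub>c, e\<^sub>c)\<close> and summing over \<open>c\<close> gives the trace of
  \<open>X\<^sup>\<dagger> A X - X\<^sup>\<dagger> B - B\<^sup>\<dagger> X + C\<close> for \<open>M = [[A, B], [B\<^sup>\<dagger>, C]]\<close>.\<close>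

lemma sesq_block_test_vector:
  assumes X: "X \<in> carrier_mat k k" and c: "c < k"
    and y: "y = (\<lambda>r. if r < k then - X $$ (r,c) else if r - k = c then 1 else 0)"
  shows "sesq (2*k) M y y = (adj X * blk k M 0 0 * X) $$ (c,c) - (adj X * blk k M 0 1) $$ (c,c)
    - (blk k M 1 0 * X) $$ (c,c) + blk k M 1 1 $$ (c,c)"
proof -
  have top: "sesq k A y z = - sesq k A (colf X c) z" and top': "sesq k A z y = - sesq k A z (colf X c)" for A z
    by (subst sesq_neg_left[symmetric] sesq_neg_right[symmetric], rule sesq_cong, auto simp: y colf_def)+
  have bottom: "sesq k A (\<lambda>r. y (k+r)) z = sesq k A (colf (1\<^sub>m k) c) z"
    and bottom': "sesq k A z (\<lambda>r. y (k+r)) = sesq k A z (colf (1\<^sub>m k) c)" for A z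
    by (rule sesq_cong; use c in \<open>auto simp: y colf_def\<close>)+
  have blk: "blk k M a b \<in> carrier_mat k k" for a b by simp
  show ?thesis
    unfolding sesq_split top top' bottom bottom'
    using sesq_cols[OF blk X X c c] sesq_cols[OF blk X one_carrier_mat c c]
      sesq_cols[OF blk one_carrier_mat X c c] sesq_cols[OF blk one_carrier_mat one_carrier_mat c c] X
    by simp
qed

lemma psd_block_trace_ineq:
  assumes M: "psd (2*k) M" and X: "X \<in> carrier_mat k k"
  shows "2 * Re (mtrace (adj X * blk k M 0 1)) \<le> Re (mtrace (adj X * blk k M 0 0 * X)) + Re (mtrace (blk k M 1 1))"
proof -
  have Mc: "M \<in> carrier_mat (2*k) (2*k)" using psdD(3)[OF M] .
  define A where "A = blk k M 0 0"
  define B where "B = blk k M 0 1"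
  define C where "C = blk k M 1 1"
  have cs: "A \<in> carrier_mat k k" "B \<in> carrier_mat k k" "C \<in> carrier_mat k k"
    unfolding A_def B_def C_def by auto
  have B': "blk k M 1 0 = adj B"
  proof (rule eq_matI)
    fix i j assume "i < dim_row (adj B)" "j < dim_col (adj B)"
    then have ij: "i < k" "j < k" using cs by auto
    then show "blk k M 1 0 $$ (i,j) = adj B $$ (i,j)"
      using hermitian_index[OF psd_hermitian[OF M] Mc, of j "k+i"] unfolding B_def by (simp add: add.commute)
  qed (use cs in auto)
  define y where "y = (\<lambda>c r. if r < k then - X $$ (r,c) else if r - k = c then 1 else (0::complex))"
  have q: "sesq (2*k) M (y c) (y c) = (adj X * A * X) $$ (c,c) - (adj X * B) $$ (c,c) - (adj B * X) $$ (c,c) + C $$ (c,c)"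
    if c: "c < k" for c
    using sesq_block_test_vector[OF X c, of "y c" M] unfolding B' A_def[symmetric] B_def[symmetric] C_def[symmetric]
    by (simp add: y_def)
  have "0 \<le> (\<Sum>c<k. Re (sesq (2*k) M (y c) (y c)))" using psdD(2)[OF M] by (simp add: sum_nonneg)
  also have "\<dots> = Re (\<Sum>c<k. sesq (2*k) M (y c) (y c))" by (simp add: Re_sum)
  also have "(\<Sum>c<k. sesq (2*k) M (y c) (y c)) = mtrace (adj X * A * X) - mtrace (adj X * B) - mtrace (adj B * X) + mtrace C"
    using q X cs unfolding mtrace_def by (simp add: sum.distrib sum_subtractf del: index_mult_mat_sum')
  also have "mtrace (adj B * X) = cnj (mtrace (adj X * B))"
    using mtrace_adj[of "adj X * B" k] X cs by simp
  finally show ?thesis unfolding A_def B_def C_def by simp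
qed

lemma blk_congruence:
  assumes P: "P \<in> carrier_mat n n" and Z: "Z \<in> carrier_mat n (k*m)" and a: "a < k" and b: "b < k"
  shows "blk m (adj Z * P * Z) a b =
    adj (mat n m (\<lambda>(i,j). Z $$ (i, a*m+j))) * P * mat n m (\<lambda>(i,j). Z $$ (i, b*m+j))"
proof (rule eq_matI)
  fix i j assume "i < dim_row (adj (mat n m (\<lambda>(i,j). Z $$ (i, a*m+j))) * P * mat n m (\<lambda>(i,j). Z $$ (i, b*m+j)))"
    "j < dim_col (adj (mat n m (\<lambda>(i,j). Z $$ (i, a*m+j))) * P * mat n m (\<lambda>(i,j). Z $$ (i, b*m+j)))"
  then have ij: "i < m" "j < m" by auto
  have "blk m (adj Z * P * Z) a b $$ (i,j) = sesq n P (colf Z (a*m+i)) (colf Z (b*m+j))"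
    using ij a b sesq_cols[OF P Z Z, of "a*m+i" "b*m+j"] by simp
  also have "\<dots> = sesq n P (colf (mat n m (\<lambda>(i,j). Z $$ (i, a*m+j))) i) (colf (mat n m (\<lambda>(i,j). Z $$ (i, b*m+j))) j)"
    using ij by (intro sesq_cong) (auto simp: colf_def)
  also have "\<dots> = (adj (mat n m (\<lambda>(i,j). Z $$ (i, a*m+j))) * P * mat n m (\<lambda>(i,j). Z $$ (i, b*m+j))) $$ (i,j)"
    using ij by (intro sesq_cols[OF P]) auto
  finally show "blk m (adj Z * P * Z) a b $$ (i,j) =
    (adj (mat n m (\<lambda>(i,j). Z $$ (i, a*m+j))) * P * mat n m (\<lambda>(i,j). Z $$ (i, b*m+j))) $$ (i,j)" .
qed auto

text \<open>With \<open>Z = [W\<^sup>\<dagger>, 1]\<close> the congruence \<open>Z\<^sup>\<dagger> |u| Z\<close> is \<open>[[W |u| W\<^sup>\<dagger>, u], [u\<^sup>\<dagger>, |u|]]\<close>.\<close>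

lemma polar_block_psd: assumes u: "u \<in> carrier_mat n n" and W: "W \<in> carrier_mat n n" and uW: "u = W * mat_abs u"
  shows "\<exists>M. psd (2*n) M \<and> blk n M 0 0 = W * mat_abs u * adj W \<and> blk n M 0 1 = u \<and> blk n M 1 1 = mat_abs u"
proof -
  define P where "P = mat_abs u"
  have P: "psd n P" using psd_mat_abs(1)[OF u] unfolding P_def .
  have Pc: "P \<in> carrier_mat n n" using psdD(3)[OF P] .
  define Z where "Z = mat n (2*n) (\<lambda>(i,s). if s < n then cnj (W $$ (s,i)) else if i = s - n then 1 else (0::complex))"
  have Zc: "Z \<in> carrier_mat n (2*n)" unfolding Z_def by simp
  have Z0: "mat n n (\<lambda>(i,j). Z $$ (i, 0*n+j)) = adj W" by (rule eq_matI) (use W in \<open>auto simp: Z_def\<close>)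
  have Z1: "mat n n (\<lambda>(i,j). Z $$ (i, 1*n+j)) = 1\<^sub>m n" by (rule eq_matI) (auto simp: Z_def)
  have "psd (2*n) (adj Z * P * Z)" by (rule psd_congruence[OF P Zc])
  moreover have "blk n (adj Z * P * Z) 0 0 = W * P * adj W"
    using blk_congruence[OF Pc Zc, of 0 0] unfolding Z0 using W Pc by simp
  moreover have "blk n (adj Z * P * Z) 0 1 = u"
    using blk_congruence[OF Pc Zc, of 0 1] unfolding Z0 Z1 using u W Pc uW unfolding P_def by simp
  moreover have "blk n (adj Z * P * Z) 1 1 = P"
    using blk_congruence[OF Pc Zc, of 1 1] unfolding Z1 using Pc by simp
  ultimately show ?thesis unfolding P_def by blast
qed

lemma mtrace_conj_partial_isometry: assumes W: "W \<in> carrier_mat n n" and P: "P \<in> carrier_mat n n" and WWP: "adj W * W * P = P"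
  shows "mtrace (W * P * adj W) = mtrace P"
proof -
  have "mtrace (W * P * adj W) = mtrace (W * (P * adj W))" using W P by simp
  also have "\<dots> = mtrace ((P * adj W) * W)" by (rule mtrace_mult_commute[of _ n n]) (use W P in auto)
  also have "\<dots> = mtrace ((adj W * W) * P)"
    using mtrace_mult_commute[of P n n "adj W * W"] W P by simp
  also have "\<dots> = mtrace P" using WWP by simp
  finally show ?thesis .
qed

lemma mtrace_adj_polar: assumes v: "v \<in> carrier_mat n n" and W: "W \<in> carrier_mat n n"
    and vW: "v = W * mat_abs v" and WW: "adj W * W * mat_abs v = mat_abs v"
  shows "mtrace (adj W * v) = complex_of_real (trace_norm v)"
proof -
  have "adj W * v = adj W * W * mat_abs v" using W mat_abs_carrier[OF v] by (subst vW) simp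
  then show ?thesis using WW mtrace_mat_abs[OF v] by simp
qed

lemma mtrace_conj_partial_isometry_le:
  assumes A: "psd n A" and W: "W \<in> carrier_mat n k" and WWW: "W * adj W * W = W"
  shows "Re (mtrace (adj W * A * W)) \<le> Re (mtrace A)"
proof -
  have Ac: "A \<in> carrier_mat n n" using psdD(3)[OF A] .
  define Q where "Q = W * adj W"
  have Qc: "Q \<in> carrier_mat n n" unfolding Q_def using W by simp
  have Qh: "adj Q = Q" unfolding Q_def using W by simp
  have "Q * Q = (W * adj W * W) * adj W" unfolding Q_def using W by simp
  then have QQ: "Q * Q = Q" unfolding WWW Q_def .
  have "mtrace (adj W * A * W) = mtrace (adj W * (A * W))" using W Ac by simp
  also have "\<dots> = mtrace ((A * W) * adj W)" by (rule mtrace_mult_commute[of _ k n]) (use W Ac in auto)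
  also have "\<dots> = mtrace (A * Q)" unfolding Q_def using W Ac by simp
  finally show ?thesis using mtrace_mult_projection_le[OF A Qc Qh QQ] by simp
qed

lemma abs_mtrace_le_trace_norm: assumes u: "u \<in> carrier_mat n n" shows "cmod (mtrace u) \<le> trace_norm u"
proof -
  obtain W where W: "W \<in> carrier_mat n n" "u = W * mat_abs u" "adj W * W * mat_abs u = mat_abs u"
    using polar_decomposition[OF u] by blast
  define P where "P = mat_abs u"
  have Pc: "P \<in> carrier_mat n n" using mat_abs_carrier[OF u] unfolding P_def .
  obtain M where M: "psd (2*n) M" "blk n M 0 0 = W * P * adj W" "blk n M 0 1 = u" "blk n M 1 1 = P"
    using polar_block_psd[OF u W(1,2)] unfolding P_def by blast
  define t where "t = mtrace u"
  define \<theta> where "\<theta> = (if t = 0 then 1 else t / complex_of_real (cmod t))"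
  have th1: "cnj \<theta> * \<theta> = 1" unfolding \<theta>_def by (auto simp: cnj_mult_self norm_divide)
  have th2: "cnj \<theta> * t = complex_of_real (cmod t)"
  proof (cases "t = 0")
    case False
    have "cnj \<theta> * t = (cnj t * t) / complex_of_real (cmod t)" unfolding \<theta>_def using False by simp
    also have "\<dots> = complex_of_real ((cmod t)^2 / cmod t)" unfolding cnj_mult_self by simp
    also have "(cmod t)^2 / cmod t = cmod t" using False by (simp add: power2_eq_square)
    finally show ?thesis .
  qed (simp add: \<theta>_def)
  define X where "X = \<theta> \<cdot>\<^sub>m 1\<^sub>m n"
  have Xc: "X \<in> carrier_mat n n" unfolding X_def by simp
  have a1: "mtrace (adj X * u) = complex_of_real (cmod t)"
    unfolding X_def adj_smult using u th2 unfolding t_def by (simp add: mult_smult_assoc_mat' mtrace_smult[of _ n])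
  have a2: "adj X * (W * P * adj W) * X = W * P * adj W"
  proof -
    have th1': "\<theta> * cnj \<theta> = 1" using th1 by (simp add: mult.commute)
    have "adj X * (W * P * adj W) * X = (\<theta> * cnj \<theta>) \<cdot>\<^sub>m (W * P * adj W)"
      unfolding X_def adj_smult using W Pc by (simp add: mult_smult_assoc_mat' mult_smult_distrib' smult_smult_mat del: assoc_mult_mat')
    also have "\<dots> = W * P * adj W" unfolding th1' by (rule eq_matI) auto
    finally show ?thesis .
  qed
  have a3: "mtrace (W * P * adj W) = mtrace P" using mtrace_conj_partial_isometry[OF W(1) Pc] W(3) unfolding P_def by simp
  have "2 * Re (mtrace (adj X * u)) \<le> Re (mtrace (adj X * (W * P * adj W) * X)) + Re (mtrace P)"
    using psd_block_trace_ineq[OF M(1) Xc] M by simp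
  then have "2 * cmod t \<le> 2 * Re (mtrace P)" unfolding a1 a2 a3 by simp
  then show ?thesis unfolding t_def trace_norm_def P_def by simp
qed

lemma operationD:
  assumes "operation n n' T"
  shows "\<And>A. A \<in> carrier_mat n n \<Longrightarrow> T A \<in> carrier_mat n' n'"
    "\<And>A B. A \<in> carrier_mat n n \<Longrightarrow> B \<in> carrier_mat n n \<Longrightarrow> T (A + B) = T A + T B"
    "\<And>A c. A \<in> carrier_mat n n \<Longrightarrow> T (c \<cdot>\<^sub>m A) = c \<cdot>\<^sub>m T A"
    "\<And>k X. psd (k*n) X \<Longrightarrow> psd (k*n') (ampl k n n' T X)"
    "\<And>A. psd n A \<Longrightarrow> Re (mtrace (T A)) \<le> Re (mtrace A)"
  using assms unfolding operation_def by auto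

lemma blk_ampl: assumes T: "\<And>A. A \<in> carrier_mat n n \<Longrightarrow> T A \<in> carrier_mat n' n'" and a: "a < k" and b: "b < k"
  shows "blk n' (ampl k n n' T X) a b = T (blk n X a b)"
proof (rule eq_matI)
  have Tc: "T (blk n X a b) \<in> carrier_mat n' n'" using T by simp
  fix i j assume "i < dim_row (T (blk n X a b))" "j < dim_col (T (blk n X a b))"
  then have ij: "i < n'" "j < n'" using Tc by auto
  have l: "a*n'+i < k*n'" "b*n'+j < k*n'" using a b ij by auto
  show "blk n' (ampl k n n' T X) a b $$ (i,j) = T (blk n X a b) $$ (i,j)"
    using ij l unfolding ampl_def by simp
qed (use T[of "blk n X a b"] in auto)

lemma operation_psd: assumes T: "operation n n' T" and A: "psd n A" shows "psd n' (T A)"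
proof -
  have Ac: "A \<in> carrier_mat n n" using psdD(3)[OF A] .
  have TA: "T A \<in> carrier_mat n' n'" using operationD(1)[OF T Ac] .
  have "psd (1*n') (ampl 1 n n' T A)" using operationD(4)[OF T, of 1 A] A by simp
  moreover have "ampl 1 n n' T A = T A"
  proof (rule eq_matI)
    fix i j assume "i < dim_row (T A)" "j < dim_col (T A)"
    then have ij: "i < n'" "j < n'" using TA by auto
    have "blk n A 0 0 = A" by (rule eq_matI) (use Ac in auto)
    then show "ampl 1 n n' T A $$ (i,j) = T A $$ (i,j)" using ij unfolding ampl_def by simp
  qed (use TA in \<open>auto simp: ampl_def\<close>)
  ultimately show ?thesis by simp
qed

text \<open>For \<open>u = W |u|\<close> the block matrix \<open>[[W |u| W\<^sup>\<dagger>, u], [u\<^sup>\<dagger>, |u|]]\<close> is positive; so is its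
  image under \<open>id \<otimes> T\<close>, and testing that image against the polar part of \<open>T u\<close> bounds \<open>\<parallel>T u\<parallel>\<^sub>1\<close>.\<close>

lemma trace_norm_operation_le: assumes T: "operation n n' T" and u: "u \<in> carrier_mat n n"
  shows "trace_norm (T u) \<le> trace_norm u"
proof -
  note Tc = operationD(1)[OF T]
  obtain W where W: "W \<in> carrier_mat n n" "u = W * mat_abs u" "adj W * W * mat_abs u = mat_abs u"
    using polar_decomposition[OF u] by blast
  define P where "P = mat_abs u"
  have P: "psd n P" using psd_mat_abs(1)[OF u] unfolding P_def .
  have Pc: "P \<in> carrier_mat n n" using psdD(3)[OF P] .
  obtain M where M: "psd (2*n) M" "blk n M 0 0 = W * P * adj W" "blk n M 0 1 = u" "blk n M 1 1 = P"
    using polar_block_psd[OF u W(1,2)] unfolding P_def by blast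
  have M': "psd (2*n') (ampl 2 n n' T M)" using operationD(4)[OF T M(1)] .
  have bM': "blk n' (ampl 2 n n' T M) a b = T (blk n M a b)" if "a < 2" "b < 2" for a b
    using blk_ampl[OF Tc that] by simp
  define v where "v = T u"
  have vc: "v \<in> carrier_mat n' n'" unfolding v_def using Tc[OF u] .
  obtain W' where W': "W' \<in> carrier_mat n' n'" "v = W' * mat_abs v" "adj W' * W' * mat_abs v = mat_abs v"
    "W' * adj W' * W' = W'"
    using polar_decomposition[OF vc] by blast
  define A where "A = W * P * adj W"
  have A: "psd n A" unfolding A_def using psd_congruence[OF P, of "adj W" n] W(1) by simp
  have "2 * trace_norm v \<le> Re (mtrace (adj W' * T A * W')) + Re (mtrace (T P))"
    using psd_block_trace_ineq[OF M' W'(1)] bM'[of 0 1] bM'[of 0 0] bM'[of 1 1] M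
      mtrace_adj_polar[OF vc W'(1-3)] unfolding A_def v_def by simp
  also have "\<dots> \<le> Re (mtrace (T A)) + Re (mtrace (T P))"
    using mtrace_conj_partial_isometry_le[OF operation_psd[OF T A] W'(1,4)] by simp
  also have "\<dots> \<le> Re (mtrace A) + Re (mtrace P)"
    using operationD(5)[OF T A] operationD(5)[OF T P] by simp
  also have "mtrace A = mtrace P"
    unfolding A_def using mtrace_conj_partial_isometry[OF W(1) Pc] W(3) unfolding P_def by simp
  finally show ?thesis unfolding v_def trace_norm_def P_def by simp
qed

section \<open>Compressions and isometric embeddings\<close>

lemma colf_kron_one:
  assumes B: "B \<in> carrier_mat n n'" and p: "p < k*n'" and b: "b < k" and j: "j < n"
  shows "colf (kron (1\<^sub>m k) B) p (b*n+j) = (if b = p div n' then colf B (p mod n') j else 0)"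
proof -
  have "b*n+j < k*n" using b j by simp
  then show ?thesis using B p b j div_mod_less[OF p] unfolding colf_def by (simp add: index_kron'[OF one_carrier_mat B])
qed

lemma ampl_congruence: assumes X: "X \<in> carrier_mat n' n" and Z: "Z \<in> carrier_mat (k*n) (k*n)"
  shows "ampl k n n' (\<lambda>A. X * A * adj X) Z = adj (kron (1\<^sub>m k) (adj X)) * Z * kron (1\<^sub>m k) (adj X)"
    (is "_ = adj ?Y * Z * ?Y")
proof (rule eq_matI)
  have Yc: "?Y \<in> carrier_mat (k*n) (k*n')" using X by simp
  fix p q assume "p < dim_row (adj ?Y * Z * ?Y)" "q < dim_col (adj ?Y * Z * ?Y)"
  then have pq: "p < k*n'" "q < k*n'" using Yc Z X by auto
  define a where "a = p div n'"
  define c where "c = q div n'"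
  have ac: "a < k" "c < k" "p mod n' < n'" "q mod n' < n'" using pq div_mod_less unfolding a_def c_def by auto
  have "(adj ?Y * Z * ?Y) $$ (p,q) = sesq (k*n) Z (colf ?Y p) (colf ?Y q)"
    using sesq_cols[OF Z Yc Yc pq] by simp
  also have "\<dots> = (\<Sum>b<k. \<Sum>b'<k. sesq n (blk n Z b b') (\<lambda>j. colf ?Y p (b*n+j)) (\<lambda>j. colf ?Y q (b'*n+j)))"
    by (rule sesq_blocks)
  also have "\<dots> = (\<Sum>b<k. \<Sum>b'<k. if b = a \<and> b' = c then sesq n (blk n Z a c) (colf (adj X) (p mod n')) (colf (adj X) (q mod n')) else 0)"
  proof (intro sum.cong refl)
    fix b b' assume "b \<in> {..<k}" "b' \<in> {..<k}"
    then have "sesq n (blk n Z b b') (\<lambda>j. colf ?Y p (b*n+j)) (\<lambda>j. colf ?Y q (b'*n+j)) =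
      sesq n (blk n Z b b') (\<lambda>j. if b = a then colf (adj X) (p mod n') j else 0) (\<lambda>j. if b' = c then colf (adj X) (q mod n') j else 0)"
      using X pq unfolding a_def c_def by (intro sesq_cong) (simp_all add: colf_kron_one)
    then show "sesq n (blk n Z b b') (\<lambda>j. colf ?Y p (b*n+j)) (\<lambda>j. colf ?Y q (b'*n+j)) =
      (if b = a \<and> b' = c then sesq n (blk n Z a c) (colf (adj X) (p mod n')) (colf (adj X) (q mod n')) else 0)"
      by (cases "b = a"; cases "b' = c") (simp_all add: sesq_zero_left sesq_zero_right)
  qed
  also have "\<dots> = sesq n (blk n Z a c) (colf (adj X) (p mod n')) (colf (adj X) (q mod n'))"
    using ac by (simp add: sum_sum_delta)
  also have "\<dots> = (adj (adj X) * blk n Z a c * adj X) $$ (p mod n', q mod n')"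
    by (rule sesq_cols) (use X ac in auto)
  also have "\<dots> = ampl k n n' (\<lambda>A. X * A * adj X) Z $$ (p,q)"
    using pq unfolding ampl_def a_def c_def by simp
  finally show "ampl k n n' (\<lambda>A. X * A * adj X) Z $$ (p,q) = (adj ?Y * Z * ?Y) $$ (p,q)" by simp
qed (use X Z in \<open>auto simp: ampl_def\<close>)

lemma operation_congruence: assumes X: "X \<in> carrier_mat n' n"
  and tr: "\<And>A. psd n A \<Longrightarrow> Re (mtrace (X * A * adj X)) \<le> Re (mtrace A)"
  shows "operation n n' (\<lambda>A. X * A * adj X)"
  unfolding operation_def
proof (intro conjI ballI allI impI)
  fix A :: "complex mat" assume A: "A \<in> carrier_mat n n"
  show "X * A * adj X \<in> carrier_mat n' n'" using X A by simp
next
  fix A :: "complex mat" and c assume A: "A \<in> carrier_mat n n"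
  show "X * (c \<cdot>\<^sub>m A) * adj X = c \<cdot>\<^sub>m (X * A * adj X)" using X A by (simp add: mult_smult_assoc_mat' mult_smult_distrib')
next
  fix A B :: "complex mat" assume A: "A \<in> carrier_mat n n" and B: "B \<in> carrier_mat n n"
  show "X * (A + B) * adj X = X * A * adj X + X * B * adj X" using X A B by (simp add: add_mult_distrib_mat' mult_add_distrib_mat')
next
  fix k Z assume Z: "psd (k*n) Z"
  have "kron (1\<^sub>m k) (adj X) \<in> carrier_mat (k*n) (k*n')" using X by simp
  then show "psd (k*n') (ampl k n n' (\<lambda>A. X * A * adj X) Z)"
    unfolding ampl_congruence[OF X psdD(3)[OF Z]] by (rule psd_congruence[OF Z])
next
  fix A assume "psd n A" then show "Re (mtrace (X * A * adj X)) \<le> Re (mtrace A)" by (rule tr)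
qed

lemma isometryD: "isometry n n' V \<Longrightarrow> V \<in> carrier_mat n' n" "isometry n n' V \<Longrightarrow> adj V * V = 1\<^sub>m n"
  unfolding isometry_def by auto

lemma operation_isometry_embed: assumes V: "isometry n n' V"
  shows "operation n n' (\<lambda>A. V * A * adj V)"
proof (rule operation_congruence)
  have Vc: "V \<in> carrier_mat n' n" "adj V * V = 1\<^sub>m n" using isometryD[OF V] by auto
  then show "V \<in> carrier_mat n' n" by simp
  fix A assume A: "psd n A"
  have Ac: "A \<in> carrier_mat n n" using psdD(3)[OF A] .
  have "mtrace (V * A * adj V) = mtrace (V * (A * adj V))" using Vc Ac by simp
  also have "\<dots> = mtrace ((A * adj V) * V)" by (rule mtrace_mult_commute[of _ n' n]) (use Vc Ac in auto)
  also have "\<dots> = mtrace A" using Vc Ac by simp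
  finally show "Re (mtrace (V * A * adj V)) \<le> Re (mtrace A)" by simp
qed

lemma operation_isometry_restrict: assumes V: "isometry n n' V"
  shows "operation n' n (\<lambda>A. adj V * A * V)"
proof -
  have Vc: "V \<in> carrier_mat n' n" "adj V * V = 1\<^sub>m n" using isometryD[OF V] by auto
  have "operation n' n (\<lambda>A. adj V * A * adj (adj V))"
  proof (rule operation_congruence)
    show "adj V \<in> carrier_mat n n'" using Vc by simp
    fix A assume A: "psd n' A"
    have "V * adj V * V = V" using Vc by simp
    then show "Re (mtrace (adj V * A * adj (adj V))) \<le> Re (mtrace A)"
      using mtrace_conj_partial_isometry_le[OF A Vc(1)] by simp
  qed
  then show ?thesis by simp
qed

section \<open>Linear maps on matrices\<close>

lemma operation_zero: assumes T: "operation n n' T" shows "T (0\<^sub>m n n) = 0\<^sub>m n' n'"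
proof -
  have "(0::complex) \<cdot>\<^sub>m 0\<^sub>m n n = 0\<^sub>m n n" by (rule eq_matI) auto
  then have "T (0\<^sub>m n n) = 0 \<cdot>\<^sub>m T (0\<^sub>m n n)" using operationD(3)[OF T, of "0\<^sub>m n n" 0] by simp
  also have "\<dots> = 0\<^sub>m n' n'" using operationD(1)[OF T, of "0\<^sub>m n n"] by (intro eq_matI) auto
  finally show ?thesis .
qed

lemma operation_msum: assumes T: "operation n n' T" and F: "\<And>i. i < N \<Longrightarrow> F i \<in> carrier_mat n n"
  shows "T (msum n n N F) = msum n' n' N (\<lambda>i. T (F i))"
  using F
proof (induction N)
  case 0 then show ?case using operation_zero[OF T] by (simp add: msum_0)
next
  case (Suc N)
  have FN: "F N \<in> carrier_mat n n" using Suc.prems by simp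
  have "T (msum n n (Suc N) F) = T (msum n n N F + F N)" by (simp add: msum_Suc[where F=F and N=N, OF FN])
  also have "\<dots> = T (msum n n N F) + T (F N)" using operationD(2)[OF T _ FN, of "msum n n N F"] by simp
  also have "\<dots> = msum n' n' N (\<lambda>i. T (F i)) + T (F N)" using Suc by simp
  also have "\<dots> = msum n' n' (Suc N) (\<lambda>i. T (F i))"
    using operationD(1)[OF T FN] by (simp add: msum_Suc[where F="\<lambda>i. T (F i)" and N=N])
  finally show ?case .
qed

lemma mat_eq_msum_munit: assumes u: "u \<in> carrier_mat n n"
  shows "u = msum n n (n*n) (\<lambda>q. u $$ (q div n, q mod n) \<cdot>\<^sub>m munit n (q div n) (q mod n))"
proof (rule eq_matI)
  fix i j assume "i < dim_row (msum n n (n*n) (\<lambda>q. u $$ (q div n, q mod n) \<cdot>\<^sub>m munit n (q div n) (q mod n)))"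
    "j < dim_col (msum n n (n*n) (\<lambda>q. u $$ (q div n, q mod n) \<cdot>\<^sub>m munit n (q div n) (q mod n)))"
  then have ij: "i < n" "j < n" by auto
  have "msum n n (n*n) (\<lambda>q. u $$ (q div n, q mod n) \<cdot>\<^sub>m munit n (q div n) (q mod n)) $$ (i,j)
      = (\<Sum>q<n*n. (u $$ (q div n, q mod n) \<cdot>\<^sub>m munit n (q div n) (q mod n)) $$ (i,j))"
    by (rule index_msum) (use ij in auto)
  also have "\<dots> = (\<Sum>q<n*n. if q = i*n+j then u $$ (i,j) else 0)"
  proof (intro sum.cong refl)
    fix q assume "q \<in> {..<n*n}"
    then have q: "q div n < n" "q mod n < n" using div_mod_less by auto
    have iff: "(i = q div n \<and> j = q mod n) \<longleftrightarrow> q = i*n+j" using ij by (metis div_mult_mod_eq add.commute mult.commute div_mult_self2 mod_mult_self2 div_less mod_less add_0_left less_nat_zero_code)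
    show "(u $$ (q div n, q mod n) \<cdot>\<^sub>m munit n (q div n) (q mod n)) $$ (i,j) = (if q = i*n+j then u $$ (i,j) else 0)"
      using q ij iff by auto
  qed
  also have "\<dots> = u $$ (i,j)" using ij by simp
  finally show "u $$ (i,j) = msum n n (n*n) (\<lambda>q. u $$ (q div n, q mod n) \<cdot>\<^sub>m munit n (q div n) (q mod n)) $$ (i,j)" by simp
qed (use u in auto)

lemma index_operation: assumes T: "operation n n' T" and u: "u \<in> carrier_mat n n" and ab: "a < n'" "b < n'"
  shows "T u $$ (a,b) = (\<Sum>i<n. \<Sum>j<n. u $$ (i,j) * T (munit n i j) $$ (a,b))"
proof -
  have "T u = msum n' n' (n*n) (\<lambda>q. T (u $$ (q div n, q mod n) \<cdot>\<^sub>m munit n (q div n) (q mod n)))"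
    by (subst mat_eq_msum_munit[OF u], rule operation_msum[OF T]) simp
  also have "\<dots> = msum n' n' (n*n) (\<lambda>q. u $$ (q div n, q mod n) \<cdot>\<^sub>m T (munit n (q div n) (q mod n)))"
    by (rule msum_cong) (simp add: operationD(3)[OF T])
  finally have "T u $$ (a,b) = (\<Sum>q<n*n. (u $$ (q div n, q mod n) \<cdot>\<^sub>m T (munit n (q div n) (q mod n))) $$ (a,b))"
    using ab by simp
  also have "\<dots> = (\<Sum>i<n. \<Sum>j<n. (u $$ (i,j) \<cdot>\<^sub>m T (munit n i j)) $$ (a,b))"
    by (simp add: sum_lessThan_mult)
  also have "\<dots> = (\<Sum>i<n. \<Sum>j<n. u $$ (i,j) * T (munit n i j) $$ (a,b))"
  proof (intro sum.cong refl)
    fix x y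
    have "T (munit n x y) \<in> carrier_mat n' n'" using operationD(1)[OF T munit_carrier] .
    then show "(u $$ (x,y) \<cdot>\<^sub>m T (munit n x y)) $$ (a,b) = u $$ (x,y) * T (munit n x y) $$ (a,b)"
      using ab by simp
  qed
  finally show ?thesis .
qed

lemma psd_munit_pair:
  assumes i: "i < n" and j: "j < n" and c: "cnj c * c = 1"
  shows "psd n (munit n i i + munit n j j + c \<cdot>\<^sub>m munit n i j + cnj c \<cdot>\<^sub>m munit n j i)"
proof (rule psd_of_sesq_square)
  fix x
  have "cnj (x i + c * x j) * (x i + c * x j) =
      cnj (x i) * x i + (cnj c * c) * (cnj (x j) * x j) + c * (cnj (x i) * x j) + cnj c * (cnj (x j) * x i)"
    by (simp add: algebra_simps)
  then show "\<exists>z. sesq n (munit n i i + munit n j j + c \<cdot>\<^sub>m munit n i j + cnj c \<cdot>\<^sub>m munit n j i) x x = cnj z * z"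
    using i j c by (intro exI[of _ "x i + c * x j"]) (simp add: sesq_add_mat sesq_smult_mat sesq_munit)
qed simp

text \<open>Trace preservation on the positive matrices \<open>|e\<^sub>i + c e\<^sub>j\<rangle>\<langle>e\<^sub>i + c e\<^sub>j|\<close> for \<open>c = 1\<close> and
  \<open>c = -\<i>\<close> forces the off-diagonal units to be mapped to traceless matrices.\<close>

lemma mtrace_tp_operation_munit: assumes T: "tp_operation n n' T" and i: "i < n" and j: "j < n"
  shows "mtrace (T (munit n i j)) = (if i = j then 1 else 0)"
proof -
  have op: "operation n n' T" using T unfolding tp_operation_def by simp
  have tp: "\<And>A. psd n A \<Longrightarrow> mtrace (T A) = mtrace A" using T unfolding tp_operation_def by simp
  have tr_munit: "mtrace (munit n a b) = (if a = b then 1 else 0)" if "a < n" "b < n" for a b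
    unfolding mtrace_def using that by simp
  have "psd n (munit n a a)" if "a < n" for a
    by (rule psd_of_sesq_square) (use that in \<open>auto simp: sesq_munit\<close>)
  then have tdiag: "mtrace (T (munit n a a)) = 1" if "a < n" for a
    using tp that tr_munit[OF that that] by simp
  note Tc = operationD(1)[OF op munit_carrier]
  show ?thesis
  proof (cases "i = j")
    case True then show ?thesis using tdiag i by simp
  next
    case False
    define a where "a = mtrace (T (munit n i j))"
    define b where "b = mtrace (T (munit n j i))"
    have e: "c * a + cnj c * b = 0" if c: "cnj c * c = 1" for c
    proof -
      define F where "F = munit n i i + munit n j j + c \<cdot>\<^sub>m munit n i j + cnj c \<cdot>\<^sub>m munit n j i"
      have "T F = T (munit n i i) + T (munit n j j) + c \<cdot>\<^sub>m T (munit n i j) + cnj c \<cdot>\<^sub>m T (munit n j i)"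
        unfolding F_def by (simp add: operationD(2,3)[OF op])
      then have "mtrace (T F) = 2 + c * a + cnj c * b"
        using Tc tdiag i j unfolding a_def b_def by (simp add: mtrace_add[of _ n'] mtrace_smult[of _ n'])
      moreover have "mtrace F = 2"
        unfolding F_def using i j False by (simp add: mtrace_add[of _ n] mtrace_smult[of _ n] tr_munit)
      ultimately show ?thesis using tp[OF psd_munit_pair[OF i j c]] unfolding F_def by simp
    qed
    have "a + b = 0" and "- \<i> * a + \<i> * b = 0" using e[of 1] e[of "- \<i>"] by simp_all
    then have "a = 0" by (simp add: algebra_simps)
    then show ?thesis using False unfolding a_def by simp
  qed
qed

lemma mtrace_tp_operation: assumes T: "tp_operation n n' T" and u: "u \<in> carrier_mat n n"
  shows "mtrace (T u) = mtrace u"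
proof -
  have op: "operation n n' T" using T unfolding tp_operation_def by simp
  have Tu: "T u \<in> carrier_mat n' n'" using operationD(1)[OF op u] .
  have "mtrace (T u) = (\<Sum>a<n'. \<Sum>i<n. \<Sum>j<n. u $$ (i,j) * T (munit n i j) $$ (a,a))"
    unfolding mtrace_def using Tu index_operation[OF op u] by simp
  also have "\<dots> = (\<Sum>i<n. \<Sum>j<n. u $$ (i,j) * (\<Sum>a<n'. T (munit n i j) $$ (a,a)))"
    by (simp add: sum_distrib_left sum.swap[of _ "{..<n'}"])
  also have "\<dots> = (\<Sum>i<n. \<Sum>j<n. u $$ (i,j) * mtrace (T (munit n i j)))"
  proof -
    have "dim_row (T (munit n i j)) = n'" for i j using operationD(1)[OF op munit_carrier, of i j] by simp
    then show ?thesis unfolding mtrace_def by simp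
  qed
  also have "\<dots> = (\<Sum>i<n. \<Sum>j<n. if i = j then u $$ (i,j) else 0)"
    by (intro sum.cong refl) (simp add: mtrace_tp_operation_munit[OF T])
  also have "\<dots> = mtrace u" unfolding mtrace_def using u by simp
  finally show ?thesis .
qed

lemma tensor_map_msum:
  "tensor_map n m n' m' T1 T2 (msum (n*m) (n*m) N F) = msum (n'*m') (n'*m') N (\<lambda>p. tensor_map n m n' m' T1 T2 (F p))"
proof (rule eq_matI)
  fix r s assume "r < dim_row (msum (n'*m') (n'*m') N (\<lambda>p. tensor_map n m n' m' T1 T2 (F p)))"
    "s < dim_col (msum (n'*m') (n'*m') N (\<lambda>p. tensor_map n m n' m' T1 T2 (F p)))"
  then have rs: "r < n'*m'" "s < n'*m'" by auto
  define K where "K = (\<lambda>i j k l. kron (T1 (munit n i j)) (T2 (munit m k l)) $$ (r,s))"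
  have "tensor_map n m n' m' T1 T2 (msum (n*m) (n*m) N F) $$ (r,s) =
      (\<Sum>i<n. \<Sum>j<n. \<Sum>k<m. \<Sum>l<m. \<Sum>p<N. F p $$ (i*m+k, j*m+l) * K i j k l)"
    using rs unfolding tensor_map_def K_def by (auto simp: sum_distrib_right intro!: sum.cong)
  also have "\<dots> = (\<Sum>p<N. \<Sum>i<n. \<Sum>j<n. \<Sum>k<m. \<Sum>l<m. F p $$ (i*m+k, j*m+l) * K i j k l)"
    by (simp only: sum.swap[where B="{..<N}"])
  also have "\<dots> = msum (n'*m') (n'*m') N (\<lambda>p. tensor_map n m n' m' T1 T2 (F p)) $$ (r,s)"
    using rs unfolding tensor_map_def K_def by simp
  finally show "tensor_map n m n' m' T1 T2 (msum (n*m) (n*m) N F) $$ (r,s) =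
      msum (n'*m') (n'*m') N (\<lambda>p. tensor_map n m n' m' T1 T2 (F p)) $$ (r,s)" .
qed (auto simp: tensor_map_def)

lemma tensor_map_kron:
  assumes T1: "operation n n' T1" and T2: "operation m m' T2"
    and u: "u \<in> carrier_mat n n" and v: "v \<in> carrier_mat m m"
  shows "tensor_map n m n' m' T1 T2 (kron u v) = kron (T1 u) (T2 v)"
proof (rule eq_matI)
  note T1c = operationD(1)[OF T1] and T2c = operationD(1)[OF T2]
  fix r s assume "r < dim_row (kron (T1 u) (T2 v))" "s < dim_col (kron (T1 u) (T2 v))"
  then have rs: "r < n'*m'" "s < n'*m'" using T1c[OF u] T2c[OF v] by auto
  define a where "a = r div m'"
  define a' where "a' = r mod m'"
  define b where "b = s div m'"
  define b' where "b' = s mod m'"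
  have ab: "a < n'" "a' < m'" "b < n'" "b' < m'" using rs div_mod_less unfolding a_def a'_def b_def b'_def by auto
  have K: "kron (T1 (munit n i j)) (T2 (munit m k l)) $$ (r,s) = T1 (munit n i j) $$ (a,b) * T2 (munit m k l) $$ (a',b')"
    for i j k l unfolding a_def a'_def b_def b'_def using rs T1c T2c by (intro index_kron') auto
  have "tensor_map n m n' m' T1 T2 (kron u v) $$ (r,s) =
      (\<Sum>i<n. \<Sum>j<n. \<Sum>k<m. \<Sum>l<m. (u $$ (i,j) * T1 (munit n i j) $$ (a,b)) * (v $$ (k,l) * T2 (munit m k l) $$ (a',b')))"
    using rs u v unfolding tensor_map_def by (auto simp: index_kron' K intro!: sum.cong)
  also have "\<dots> = (\<Sum>i<n. \<Sum>j<n. u $$ (i,j) * T1 (munit n i j) $$ (a,b)) * (\<Sum>k<m. \<Sum>l<m. v $$ (k,l) * T2 (munit m k l) $$ (a',b'))"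
    by (simp only: sum_distrib_right) (simp only: sum_distrib_left)
  also have "\<dots> = T1 u $$ (a,b) * T2 v $$ (a',b')"
    using index_operation[OF T1 u ab(1,3)] index_operation[OF T2 v ab(2,4)] by simp
  also have "\<dots> = kron (T1 u) (T2 v) $$ (r,s)"
    unfolding a_def a'_def b_def b'_def using rs T1c[OF u] T2c[OF v] by (intro index_kron'[symmetric]) auto
  finally show "tensor_map n m n' m' T1 T2 (kron u v) $$ (r,s) = kron (T1 u) (T2 v) $$ (r,s)" .
qed (use operationD(1)[OF T1 u] operationD(1)[OF T2 v] in \<open>auto simp: tensor_map_def\<close>)

lemma tensor_map_msum_kron:
  assumes T1: "operation n n' T1" and T2: "operation m m' T2"
    and u: "\<And>i. i < N \<Longrightarrow> u i \<in> carrier_mat n n" and v: "\<And>i. i < N \<Longrightarrow> v i \<in> carrier_mat m m"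
  shows "tensor_map n m n' m' T1 T2 (msum (n*m) (n*m) N (\<lambda>i. kron (u i) (v i)))
    = msum (n'*m') (n'*m') N (\<lambda>i. kron (T1 (u i)) (T2 (v i)))"
  unfolding tensor_map_msum using tensor_map_kron[OF T1 T2 u v] by (intro msum_cong) simp

section \<open>The greatest cross norm\<close>

definition kron_decomp :: "nat \<Rightarrow> nat \<Rightarrow> complex mat \<Rightarrow> nat \<Rightarrow> (nat \<Rightarrow> complex mat) \<Rightarrow> (nat \<Rightarrow> complex mat) \<Rightarrow> bool" where
  "kron_decomp n m t N u v \<longleftrightarrow> (\<forall>i<N. u i \<in> carrier_mat n n \<and> v i \<in> carrier_mat m m) \<and>
     t = msum (n*m) (n*m) N (\<lambda>i. kron (u i) (v i))"

definition decomp_cost :: "nat \<Rightarrow> (nat \<Rightarrow> complex mat) \<Rightarrow> (nat \<Rightarrow> complex mat) \<Rightarrow> real" where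
  "decomp_cost N u v = (\<Sum>i<N. trace_norm (u i) * trace_norm (v i))"

lemma cross_norm_eq_Inf: "cross_norm n m t = Inf {decomp_cost N u v | N u v. kron_decomp n m t N u v}"
  unfolding cross_norm_def kron_decomp_def decomp_cost_def by meson

lemma decomp_cost_nonneg: "kron_decomp n m t N u v \<Longrightarrow> 0 \<le> decomp_cost N u v"
  unfolding kron_decomp_def decomp_cost_def by (auto intro!: sum_nonneg mult_nonneg_nonneg trace_norm_nonneg)

lemma bdd_below_decomp_costs: "bdd_below {decomp_cost N u v | N u v. kron_decomp n m t N u v}"
  by (rule bdd_belowI[of _ 0]) (auto intro: decomp_cost_nonneg)

lemma kron_decomp_exists: assumes t: "t \<in> carrier_mat (n*m) (n*m)" shows "\<exists>N u v. kron_decomp n m t N u v"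
proof -
  define K where "K = n*m"
  define u where "u = (\<lambda>q. t $$ (q div K, q mod K) \<cdot>\<^sub>m munit n (q div K div m) (q mod K div m))"
  define v where "v = (\<lambda>q. munit m (q div K mod m) (q mod K mod m))"
  have "t = msum (n*m) (n*m) (K*K) (\<lambda>q. kron (u q) (v q))"
  proof (rule eq_matI)
    fix r s assume "r < dim_row (msum (n*m) (n*m) (K*K) (\<lambda>q. kron (u q) (v q)))"
      "s < dim_col (msum (n*m) (n*m) (K*K) (\<lambda>q. kron (u q) (v q)))"
    then have rs: "r < K" "s < K" unfolding K_def by auto
    then have m0: "0 < m" unfolding K_def by (cases m) auto
    have rl: "r div m < n" "s div m < n" "r mod m < m" "s mod m < m" using rs div_mod_less unfolding K_def by auto
    have e: "kron (u (p*K+q)) (v (p*K+q)) $$ (r,s) = (if p = r \<and> q = s then t $$ (r,s) else 0)"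
      if pq: "p < K" "q < K" for p q
    proof -
      have d1: "(p*K+q) div K = p" "(p*K+q) mod K = q" using pq by auto
      have "kron (u (p*K+q)) (v (p*K+q)) $$ (r,s) = u (p*K+q) $$ (r div m, s div m) * v (p*K+q) $$ (r mod m, s mod m)"
        using rs unfolding K_def u_def v_def by (intro index_kron') auto
      also have "\<dots> = t $$ (p,q) * (if r div m = p div m \<and> s div m = q div m then 1 else 0)
          * (if r mod m = p mod m \<and> s mod m = q mod m then 1 else 0)"
        unfolding u_def v_def d1 using rl by simp
      also have "\<dots> = (if p = r \<and> q = s then t $$ (r,s) else 0)"
        using div_mod_eq_iff[OF m0, of r p] div_mod_eq_iff[OF m0, of s q] by auto
      finally show ?thesis .
    qed
    have "msum (n*m) (n*m) (K*K) (\<lambda>q. kron (u q) (v q)) $$ (r,s) = (\<Sum>p<K. \<Sum>q<K. kron (u (p*K+q)) (v (p*K+q)) $$ (r,s))"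
      using rs unfolding K_def by (simp add: sum_lessThan_mult)
    also have "\<dots> = t $$ (r,s)" using rs by (simp add: e sum_sum_delta)
    finally show "t $$ (r,s) = msum (n*m) (n*m) (K*K) (\<lambda>q. kron (u q) (v q)) $$ (r,s)" by simp
  qed (use t in auto)
  then have "kron_decomp n m t (K*K) u v" unfolding kron_decomp_def u_def v_def by simp
  then show ?thesis by blast
qed

lemma cross_norm_le_cost: "kron_decomp n m t N u v \<Longrightarrow> cross_norm n m t \<le> decomp_cost N u v"
  unfolding cross_norm_eq_Inf by (rule cInf_lower[OF _ bdd_below_decomp_costs]) blast

lemma cross_norm_greatest:
  assumes t: "t \<in> carrier_mat (n*m) (n*m)" and c: "\<And>N u v. kron_decomp n m t N u v \<Longrightarrow> c \<le> decomp_cost N u v"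
  shows "c \<le> cross_norm n m t"
  unfolding cross_norm_eq_Inf using kron_decomp_exists[OF t] c by (intro cInf_greatest) auto

lemma cross_norm_approx: assumes t: "t \<in> carrier_mat (n*m) (n*m)" and e: "0 < e"
  shows "\<exists>N u v. kron_decomp n m t N u v \<and> decomp_cost N u v < cross_norm n m t + e"
proof -
  have ne: "{decomp_cost N u v | N u v. kron_decomp n m t N u v} \<noteq> {}" using kron_decomp_exists[OF t] by blast
  have "Inf {decomp_cost N u v | N u v. kron_decomp n m t N u v} < cross_norm n m t + e"
    using e unfolding cross_norm_eq_Inf by simp
  then show ?thesis using cInf_less_iff[OF ne bdd_below_decomp_costs] by blast
qed

text \<open>Local operations contract every factor of a decomposition in trace norm.\<close>

lemma cross_norm_local_operations_le:
  assumes t: "t \<in> carrier_mat (n*m) (n*m)" and T1: "operation n n' T1" and T2: "operation m m' T2"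
    and image: "\<And>N u v. kron_decomp n m t N u v \<Longrightarrow> t' = msum (n'*m') (n'*m') N (\<lambda>i. kron (T1 (u i)) (T2 (v i)))"
  shows "cross_norm n' m' t' \<le> cross_norm n m t"
proof (rule cross_norm_greatest[OF t])
  fix N u v assume d: "kron_decomp n m t N u v"
  then have uv: "u i \<in> carrier_mat n n" "v i \<in> carrier_mat m m" if "i < N" for i
    using that unfolding kron_decomp_def by auto
  have "kron_decomp n' m' t' N (\<lambda>i. T1 (u i)) (\<lambda>i. T2 (v i))"
    unfolding kron_decomp_def using image[OF d] operationD(1)[OF T1] operationD(1)[OF T2] uv by auto
  then have "cross_norm n' m' t' \<le> decomp_cost N (\<lambda>i. T1 (u i)) (\<lambda>i. T2 (v i))" by (rule cross_norm_le_cost)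
  also have "\<dots> \<le> decomp_cost N u v"
    unfolding decomp_cost_def using uv
    by (intro sum_mono mult_mono trace_norm_operation_le[OF T1] trace_norm_operation_le[OF T2])
      (auto intro: trace_norm_nonneg operationD(1)[OF T2])
  finally show "cross_norm n' m' t' \<le> decomp_cost N u v" .
qed

lemma mtrace_kron_decomp: "kron_decomp n m t N u v \<Longrightarrow> mtrace t = (\<Sum>i<N. mtrace (u i) * mtrace (v i))"
  unfolding kron_decomp_def by (auto simp: mtrace_msum mtrace_kron intro!: sum.cong)

lemma cross_norm_ge_1: assumes t: "t \<in> carrier_mat (n*m) (n*m)" and tr: "mtrace t = 1"
  shows "1 \<le> cross_norm n m t"
proof (rule cross_norm_greatest[OF t])
  fix N u v assume d: "kron_decomp n m t N u v"
  then have uv: "u i \<in> carrier_mat n n" "v i \<in> carrier_mat m m" if "i < N" for i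
    using that unfolding kron_decomp_def by auto
  have "1 = cmod (\<Sum>i<N. mtrace (u i) * mtrace (v i))" using tr mtrace_kron_decomp[OF d] by simp
  also have "\<dots> \<le> (\<Sum>i<N. cmod (mtrace (u i)) * cmod (mtrace (v i)))"
    by (rule order_trans[OF norm_sum]) (simp add: norm_mult)
  also have "\<dots> \<le> decomp_cost N u v"
    unfolding decomp_cost_def using uv
    by (intro sum_mono mult_mono abs_mtrace_le_trace_norm) (auto intro: trace_norm_nonneg)
  finally show "1 \<le> decomp_cost N u v" .
qed

lemma kron_decomp_convex_comb:
  assumes s: "kron_decomp n m s N1 u1 v1" and t: "kron_decomp n m t N2 u2 v2" and p: "0 \<le> p" "p \<le> 1"
  shows "\<exists>N u v. kron_decomp n m (complex_of_real p \<cdot>\<^sub>m s + complex_of_real (1 - p) \<cdot>\<^sub>m t) N u v \<and>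
    decomp_cost N u v = p * decomp_cost N1 u1 v1 + (1 - p) * decomp_cost N2 u2 v2"
proof (intro exI conjI)
  have u1: "u1 i \<in> carrier_mat n n" "v1 i \<in> carrier_mat m m" if "i < N1" for i using s that unfolding kron_decomp_def by auto
  have u2: "u2 i \<in> carrier_mat n n" "v2 i \<in> carrier_mat m m" if "i < N2" for i using t that unfolding kron_decomp_def by auto
  define u where "u = (\<lambda>i. if i < N1 then complex_of_real p \<cdot>\<^sub>m u1 i else complex_of_real (1 - p) \<cdot>\<^sub>m u2 (i - N1))"
  define v where "v = (\<lambda>i. if i < N1 then v1 i else v2 (i - N1))"
  have "msum (n*m) (n*m) (N1 + N2) (\<lambda>i. kron (u i) (v i)) =
      msum (n*m) (n*m) N1 (\<lambda>i. complex_of_real p \<cdot>\<^sub>m kron (u1 i) (v1 i))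
      + msum (n*m) (n*m) N2 (\<lambda>i. complex_of_real (1 - p) \<cdot>\<^sub>m kron (u2 i) (v2 i))"
    unfolding msum_append u_def v_def
    by (intro arg_cong2[where f="(+)"] msum_cong) (auto simp: kron_smult_left)
  also have "\<dots> = complex_of_real p \<cdot>\<^sub>m s + complex_of_real (1 - p) \<cdot>\<^sub>m t"
    using s t u1 u2 unfolding kron_decomp_def by (simp add: msum_smult)
  finally show "kron_decomp n m (complex_of_real p \<cdot>\<^sub>m s + complex_of_real (1 - p) \<cdot>\<^sub>m t) (N1 + N2) u v"
    unfolding kron_decomp_def using u1 u2 by (auto simp: u_def v_def)
  have a: "trace_norm (complex_of_real p \<cdot>\<^sub>m u1 i) = p * trace_norm (u1 i)" if "i < N1" for i
    using trace_norm_smult[OF u1(1)[OF that]] p by simp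
  have b: "trace_norm (complex_of_real (1 - p) \<cdot>\<^sub>m u2 i) = (1 - p) * trace_norm (u2 i)" if "i < N2" for i
    using trace_norm_smult[OF u2(1)[OF that], of "complex_of_real (1 - p)"] p by (simp del: of_real_diff)
  show "decomp_cost (N1 + N2) u v = p * decomp_cost N1 u1 v1 + (1 - p) * decomp_cost N2 u2 v2"
    unfolding decomp_cost_def sum_lessThan_add
    by (simp add: u_def v_def a b sum_distrib_left mult.assoc del: of_real_diff)
qed

lemma cross_norm_convex:
  assumes s: "s \<in> carrier_mat (n*m) (n*m)" and t: "t \<in> carrier_mat (n*m) (n*m)" and p: "0 \<le> p" "p \<le> 1"
  shows "cross_norm n m (complex_of_real p \<cdot>\<^sub>m s + complex_of_real (1 - p) \<cdot>\<^sub>m t)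
    \<le> p * cross_norm n m s + (1 - p) * cross_norm n m t"
proof (rule field_le_epsilon)
  fix e :: real assume e: "0 < e"
  obtain N1 u1 v1 where d1: "kron_decomp n m s N1 u1 v1" and c1: "decomp_cost N1 u1 v1 < cross_norm n m s + e"
    using cross_norm_approx[OF s e] by blast
  obtain N2 u2 v2 where d2: "kron_decomp n m t N2 u2 v2" and c2: "decomp_cost N2 u2 v2 < cross_norm n m t + e"
    using cross_norm_approx[OF t e] by blast
  obtain N u v where d: "kron_decomp n m (complex_of_real p \<cdot>\<^sub>m s + complex_of_real (1 - p) \<cdot>\<^sub>m t) N u v"
    and c: "decomp_cost N u v = p * decomp_cost N1 u1 v1 + (1 - p) * decomp_cost N2 u2 v2"
    using kron_decomp_convex_comb[OF d1 d2 p] by blast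
  have "cross_norm n m (complex_of_real p \<cdot>\<^sub>m s + complex_of_real (1 - p) \<cdot>\<^sub>m t) \<le> decomp_cost N u v"
    by (rule cross_norm_le_cost[OF d])
  also have "\<dots> \<le> p * (cross_norm n m s + e) + (1 - p) * (cross_norm n m t + e)"
    unfolding c using c1 c2 p by (intro add_mono mult_left_mono) auto
  finally show "cross_norm n m (complex_of_real p \<cdot>\<^sub>m s + complex_of_real (1 - p) \<cdot>\<^sub>m t)
    \<le> p * cross_norm n m s + (1 - p) * cross_norm n m t + e" by (simp add: algebra_simps)
qed

lemma densityD: "density n A \<Longrightarrow> psd n A" "density n A \<Longrightarrow> mtrace A = 1" "density n A \<Longrightarrow> A \<in> carrier_mat n n"
  unfolding density_def using psdD(3) by auto

lemma trace_norm_density: "density n A \<Longrightarrow> trace_norm A = 1"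
  using trace_norm_psd[OF densityD(1)] densityD(2) by simp

lemma cross_norm_density_ge_1: "density (n*m) \<sigma> \<Longrightarrow> 1 \<le> cross_norm n m \<sigma>"
  using cross_norm_ge_1 densityD(2,3) by blast

lemma cross_norm_separable: assumes d: "density (n*m) \<sigma>" and sep: "separable n m \<sigma>"
  shows "cross_norm n m \<sigma> = 1"
proof -
  obtain N \<omega> \<rho>1 \<rho>2 where h: "\<forall>i<N. 0 < \<omega> i \<and> density n (\<rho>1 i) \<and> density m (\<rho>2 i)"
    and \<sigma>: "\<sigma> = msum (n*m) (n*m) N (\<lambda>i. complex_of_real (\<omega> i) \<cdot>\<^sub>m kron (\<rho>1 i) (\<rho>2 i))"
    using sep unfolding separable_def by blast
  define u where "u = (\<lambda>i. complex_of_real (\<omega> i) \<cdot>\<^sub>m \<rho>1 i)"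
  have c: "\<rho>1 i \<in> carrier_mat n n" "\<rho>2 i \<in> carrier_mat m m" if "i < N" for i using h that densityD(3) by auto
  have dec: "kron_decomp n m \<sigma> N u \<rho>2"
    unfolding kron_decomp_def \<sigma> u_def using c by (auto intro: msum_cong simp: kron_smult_left)
  have "1 = (\<Sum>i<N. mtrace (u i) * mtrace (\<rho>2 i))" using densityD(2)[OF d] mtrace_kron_decomp[OF dec] by simp
  also have "\<dots> = (\<Sum>i<N. complex_of_real (\<omega> i))"
  proof (rule sum.cong[OF refl])
    fix i assume "i \<in> {..<N}"
    then show "mtrace (u i) * mtrace (\<rho>2 i) = complex_of_real (\<omega> i)"
      unfolding u_def using mtrace_smult[OF c(1)] h densityD(2) by auto
  qed
  finally have "(\<Sum>i<N. \<omega> i) = 1" by (metis of_real_eq_1_iff of_real_sum)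
  moreover have "decomp_cost N u \<rho>2 = (\<Sum>i<N. \<omega> i)"
    unfolding decomp_cost_def u_def using trace_norm_smult[OF c(1)] h trace_norm_density
    by (intro sum.cong) auto
  ultimately have "cross_norm n m \<sigma> \<le> 1" using cross_norm_le_cost[OF dec] by simp
  then show ?thesis using cross_norm_density_ge_1[OF d] by simp
qed

lemma kron_conj: assumes X1: "X1 \<in> carrier_mat n' n" and X2: "X2 \<in> carrier_mat m' m"
  and u: "u \<in> carrier_mat n n" and v: "v \<in> carrier_mat m m"
  shows "kron X1 X2 * kron u v * adj (kron X1 X2) = kron (X1 * u * adj X1) (X2 * v * adj X2)"
proof -
  have "kron X1 X2 * kron u v = kron (X1 * u) (X2 * v)" by (rule kron_mult[OF X1 X2 u v])
  moreover have "kron (X1 * u) (X2 * v) * kron (adj X1) (adj X2) = kron (X1 * u * adj X1) (X2 * v * adj X2)"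
    by (rule kron_mult) (use X1 X2 u v in auto)
  ultimately show ?thesis unfolding adj_kron by simp
qed

lemma kron_conj_msum: assumes X1: "X1 \<in> carrier_mat n' n" and X2: "X2 \<in> carrier_mat m' m"
  and d: "kron_decomp n m t N u v"
  shows "kron X1 X2 * t * adj (kron X1 X2) = msum (n'*m') (n'*m') N (\<lambda>i. kron (X1 * u i * adj X1) (X2 * v i * adj X2))"
proof -
  have u: "u i \<in> carrier_mat n n" and v: "v i \<in> carrier_mat m m" if "i < N" for i
    using d that unfolding kron_decomp_def by auto
  have t: "t = msum (n*m) (n*m) N (\<lambda>i. kron (u i) (v i))" using d unfolding kron_decomp_def by simp
  have K: "kron X1 X2 \<in> carrier_mat (n'*m') (n*m)" using X1 X2 by simp
  have "kron X1 X2 * t = msum (n'*m') (n*m) N (\<lambda>i. kron X1 X2 * kron (u i) (v i))"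
    unfolding t by (rule msum_mult_left[OF K]) (use u v in simp)
  moreover have "msum (n'*m') (n*m) N (\<lambda>i. kron X1 X2 * kron (u i) (v i)) * adj (kron X1 X2)
      = msum (n'*m') (n'*m') N (\<lambda>i. kron X1 X2 * kron (u i) (v i) * adj (kron X1 X2))"
    by (rule msum_mult_right) (use K u v in simp_all)
  moreover have "\<dots> = msum (n'*m') (n'*m') N (\<lambda>i. kron (X1 * u i * adj X1) (X2 * v i * adj X2))"
    by (rule msum_cong) (rule kron_conj[OF X1 X2 u v])
  ultimately show ?thesis by (simp del: assoc_mult_mat')
qed

lemma cross_norm_isometry:
  assumes \<sigma>: "\<sigma> \<in> carrier_mat (n*m) (n*m)" and V1: "isometry n n' V1" and V2: "isometry m m' V2"
  shows "cross_norm n' m' (kron V1 V2 * \<sigma> * adj (kron V1 V2)) = cross_norm n m \<sigma>"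
proof (rule antisym)
  have V: "V1 \<in> carrier_mat n' n" "adj V1 * V1 = 1\<^sub>m n" "V2 \<in> carrier_mat m' m" "adj V2 * V2 = 1\<^sub>m m"
    using isometryD[OF V1] isometryD[OF V2] by auto
  define \<sigma>' where "\<sigma>' = kron V1 V2 * \<sigma> * adj (kron V1 V2)"
  have \<sigma>': "\<sigma>' \<in> carrier_mat (n'*m') (n'*m')" unfolding \<sigma>'_def using V \<sigma> by simp
  have "adj (kron V1 V2) * kron V1 V2 = 1\<^sub>m (n*m)"
    unfolding adj_kron using kron_mult[of "adj V1" n n' "adj V2" m m' V1 n V2 m] V by (simp add: kron_one)
  then have "\<sigma> = kron (adj V1) (adj V2) * \<sigma>' * adj (kron (adj V1) (adj V2))"
    unfolding \<sigma>'_def adj_kron[symmetric] using V \<sigma> by simp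
  then show "cross_norm n m \<sigma> \<le> cross_norm n' m' \<sigma>'"
    using cross_norm_local_operations_le[OF \<sigma>' operation_isometry_restrict[OF V1] operation_isometry_restrict[OF V2]]
      kron_conj_msum[of "adj V1" n n' "adj V2" m m'] V by simp
  show "cross_norm n' m' \<sigma>' \<le> cross_norm n m \<sigma>"
    unfolding \<sigma>'_def
    by (rule cross_norm_local_operations_le[OF \<sigma> operation_isometry_embed[OF V1] operation_isometry_embed[OF V2]])
      (rule kron_conj_msum[OF V(1,3)])
qed

lemma cross_norm_tensor_map_le:
  assumes \<sigma>: "\<sigma> \<in> carrier_mat (n*m) (n*m)" and T1: "operation n n' T1" and T2: "operation m m' T2"
  shows "cross_norm n' m' (tensor_map n m n' m' T1 T2 \<sigma>) \<le> cross_norm n m \<sigma>"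
  by (rule cross_norm_local_operations_le[OF \<sigma> T1 T2]) (auto simp: kron_decomp_def tensor_map_msum_kron[OF T1 T2])

lemma mtrace_tensor_map:
  assumes \<sigma>: "\<sigma> \<in> carrier_mat (n*m) (n*m)" and T1: "tp_operation n n' T1" and T2: "tp_operation m m' T2"
  shows "mtrace (tensor_map n m n' m' T1 T2 \<sigma>) = mtrace \<sigma>"
proof -
  have op: "operation n n' T1" "operation m m' T2" using T1 T2 unfolding tp_operation_def by auto
  obtain N u v where d: "kron_decomp n m \<sigma> N u v" using kron_decomp_exists[OF \<sigma>] by blast
  then have uv: "u i \<in> carrier_mat n n" "v i \<in> carrier_mat m m" if "i < N" for i
    using that unfolding kron_decomp_def by auto
  have "kron_decomp n' m' (tensor_map n m n' m' T1 T2 \<sigma>) N (\<lambda>i. T1 (u i)) (\<lambda>i. T2 (v i))"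
    using d uv operationD(1)[OF op(1)] operationD(1)[OF op(2)]
    unfolding kron_decomp_def by (auto simp: tensor_map_msum_kron[OF op])
  then have "mtrace (tensor_map n m n' m' T1 T2 \<sigma>) = (\<Sum>i<N. mtrace (T1 (u i)) * mtrace (T2 (v i)))"
    by (rule mtrace_kron_decomp)
  also have "\<dots> = mtrace \<sigma>"
    using mtrace_kron_decomp[OF d] uv by (simp add: mtrace_tp_operation[OF T1] mtrace_tp_operation[OF T2])
  finally show ?thesis .
qed

section \<open>Entanglement measures from the cross norm\<close>

lemma unitary_isometry: "unitary n U \<Longrightarrow> isometry n n U"
  unfolding unitary_def isometry_def by auto

lemma density_convex_comb:
  assumes \<sigma>: "density n \<sigma>" and \<tau>: "density n \<tau>" and p: "0 \<le> p" "p \<le> 1"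
  shows "density n (complex_of_real p \<cdot>\<^sub>m \<sigma> + complex_of_real (1 - p) \<cdot>\<^sub>m \<tau>)"
proof -
  have "psd n (complex_of_real p \<cdot>\<^sub>m \<sigma>)" "psd n (complex_of_real (1 - p) \<cdot>\<^sub>m \<tau>)"
    using psd_smult[OF densityD(1)[OF \<sigma>]] psd_smult[OF densityD(1)[OF \<tau>], of "1 - p"] p by simp_all
  then show ?thesis
    unfolding density_def using densityD[OF \<sigma>] densityD[OF \<tau>]
    by (auto intro: psd_add simp: mtrace_add[of _ n] mtrace_smult[of _ n])
qed

lemma cross_norm_tensor_map_ge_1:
  assumes d: "density (n*m) \<sigma>" and T1: "tp_operation n n' T1" and T2: "tp_operation m m' T2"
  shows "1 \<le> cross_norm n' m' (tensor_map n m n' m' T1 T2 \<sigma>)"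
proof (rule cross_norm_ge_1)
  show "tensor_map n m n' m' T1 T2 \<sigma> \<in> carrier_mat (n'*m') (n'*m')" unfolding tensor_map_def by simp
  show "mtrace (tensor_map n m n' m' T1 T2 \<sigma>) = 1" using mtrace_tensor_map[OF densityD(3)[OF d] T1 T2] densityD(2)[OF d] by simp
qed

lemma mono_convex_on_le_combination:
  fixes g :: "real \<Rightarrow> real"
  assumes cv: "convex_on {c..} g" and mo: "mono_on {c..} g"
    and x: "c \<le> x" "x \<le> p * a + (1 - p) * b" and ab: "c \<le> a" "c \<le> b" and p: "0 \<le> p" "p \<le> 1"
  shows "g x \<le> p * g a + (1 - p) * g b"
proof -
  have "p * c + (1 - p) * c \<le> p * a + (1 - p) * b"
    using ab p by (intro add_mono mult_left_mono) auto
  then have "g x \<le> g (p * a + (1 - p) * b)" using x by (intro mono_onD[OF mo]) (auto simp: algebra_simps)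
  also have "\<dots> \<le> p * g a + (1 - p) * g b"
    using convex_onD[OF cv, of "1 - p" a b] p ab by simp
  finally show ?thesis .
qed

lemma ent_measure_comp_cross_norm:
  fixes g :: "real \<Rightarrow> real"
  assumes cv: "convex_on {1..} g" and mo: "mono_on {1..} g" and g1: "g 1 = 0"
  shows "ent_measure (\<lambda>n m \<sigma>. g (cross_norm n m \<sigma>))"
  unfolding ent_measure_def
proof (intro conjI allI impI; (elim conjE)?)
  fix n m \<sigma> assume d: "density (n*m) \<sigma>"
  show "0 \<le> g (cross_norm n m \<sigma>)"
    using mono_onD[OF mo, of 1 "cross_norm n m \<sigma>"] cross_norm_density_ge_1[OF d] g1 by simp
  assume "separable n m \<sigma>"
  then show "g (cross_norm n m \<sigma>) = 0" using cross_norm_separable[OF d] g1 by simp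
next
  fix n m n' m' V1 V2 \<sigma> assume "density (n*m) \<sigma>" "isometry n n' V1" "isometry m m' V2"
  then show "g (cross_norm n' m' (kron V1 V2 * \<sigma> * adj (kron V1 V2))) = g (cross_norm n m \<sigma>)"
    using cross_norm_isometry densityD(3) by metis
next
  fix n m U1 U2 \<sigma> assume "density (n*m) \<sigma>" "unitary n U1" "unitary m U2"
  then show "g (cross_norm n m (kron U1 U2 * \<sigma> * adj (kron U1 U2))) = g (cross_norm n m \<sigma>)"
    using cross_norm_isometry densityD(3) unitary_isometry by metis
next
  fix n m n' m' T1 T2 \<sigma> assume d: "density (n*m) \<sigma>" and T: "tp_operation n n' T1" "tp_operation m m' T2"
  then show "g (cross_norm n' m' (tensor_map n m n' m' T1 T2 \<sigma>)) \<le> g (cross_norm n m \<sigma>)"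
    using cross_norm_tensor_map_ge_1[OF d T] cross_norm_tensor_map_le[OF densityD(3)[OF d]] cross_norm_density_ge_1[OF d]
    unfolding tp_operation_def by (intro mono_onD[OF mo]) auto
next
  fix n m \<sigma> \<tau> and p :: real
  assume ds: "density (n*m) \<sigma>" and dt: "density (n*m) \<tau>" and p: "0 \<le> p" "p \<le> 1"
  show "g (cross_norm n m (complex_of_real p \<cdot>\<^sub>m \<sigma> + complex_of_real (1 - p) \<cdot>\<^sub>m \<tau>))
      \<le> p * g (cross_norm n m \<sigma>) + (1 - p) * g (cross_norm n m \<tau>)"
    by (rule mono_convex_on_le_combination[OF cv mo cross_norm_density_ge_1[OF density_convex_comb[OF ds dt p]]
          cross_norm_convex[OF densityD(3)[OF ds] densityD(3)[OF dt] p]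
          cross_norm_density_ge_1[OF ds] cross_norm_density_ge_1[OF dt] p])
qed

theorem mainTheorem4:
  fixes f :: "real \<Rightarrow> real"
  assumes "convex_on {1..} f"
    and "mono_on {1..} f"
    and "f 1 = 0"
  shows "ent_measure (\<lambda>n m \<sigma>. f (cross_norm n m \<sigma>))
    \<and> ent_measure (\<lambda>n m \<sigma>. cross_norm n m \<sigma> - 1)"
proof
  show "ent_measure (\<lambda>n m \<sigma>. f (cross_norm n m \<sigma>))" using ent_measure_comp_cross_norm[OF assms] .
  have "convex_on {1..} (\<lambda>x::real. x - 1)" unfolding convex_on_def by (auto simp: algebra_simps)
  moreover have "mono_on {1..} (\<lambda>x::real. x - 1)" by (auto intro: mono_onI)
  ultimately show "ent_measure (\<lambda>n m \<sigma>. cross_norm n m \<sigma> - 1)"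
    using ent_measure_comp_cross_norm[of "\<lambda>x. x - 1"] by simp
qed

end
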